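(* Consider the following time-allocation model. Task durations $X_1,X_2,\dots$ are i.i.d. copies of a random variable $X$ taking values in $[0,C]$ (with $C>0$). A measurable reward function $r:[0,C]\to[E,D]$ is given, with $E\le 0\le D$. Task proposals arrive according to a Poisson process of intensity $\lambda>0$ while the agent is idle (equivalently, the idle times between the end of the previous task, or the previous rejection, and the next proposal are i.i.d. exponential with parameter $\lambda$, independent of the durations). When a task of duration $x$ is proposed, the agent either accepts it, in which case she is busy during a time $x$ and earns expected reward $r(x)$, or rejects it and stays idle. For $t\in[0,T]$, let $v(t)$ be the value function, i.e. the maximal expected total reward that a policy can accumulate from tasks proposed in $[t,T]$ when the agent is idle (on hold) at time $t$, and set $v(t)=0$ for $t\ge T$. Then $v$ satisfies the dynamic programming equation $$v'(t)=-\lambda\,\mathbb{E}\big[(r(X)+v(t+X)-v(t))_+\big]\ \text{ for all } t<T,\qquad v(t)=0\ \text{ for all } t\ge T,$$ where $(z)_+=\max\{z,0\}$. Moreover the function $\Phi:\mathbb{R}_+\to\mathbb{R}$, $\Phi(c)=\lambda\,\mathbb{E}[(r(X)-cX)_+]-c$ has a unique root $c^*$, and, writing $w(t)=c^*(T-t)$, for all $t\in[0,T]$, $$w(t-C)\ \ge\ v(t)\ \ge\ w(t).$$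
   Context: $X$ denotes a generic task duration with the same law as the $X_i$. The expectation $\mathbb{E}[(r(X)+v(t+X)-v(t))_+]$ is over $X$. *)

theory Defs
  imports "HOL-Probability.Probability"
begin

text \<open>Law of one (idle time, task duration) pair: an Exp(l) idle time independent
  of a duration distributed as X.\<close>
definition task_measure :: "real \<Rightarrow> 'a measure \<Rightarrow> ('a \<Rightarrow> real) \<Rightarrow> (real \<times> real) measure" where
  "task_measure l M X = density lborel (exponential_density l) \<Otimes>\<^sub>M distr M borel X"

definition sample_space :: "real \<Rightarrow> 'a measure \<Rightarrow> ('a \<Rightarrow> real) \<Rightarrow> (nat \<Rightarrow> real \<times> real) measure" where
  "sample_space l M X = PiM UNIV (\<lambda>_::nat. task_measure l M X)"

text \<open>A (history dependent, deterministic) policy: d k w says whether the k-th proposal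
  is accepted; it may only depend on the history up to and including the k-th proposal.\<close>
type_synonym policy = "nat \<Rightarrow> (nat \<Rightarrow> real \<times> real) \<Rightarrow> bool"

definition admissible_policy :: "(nat \<Rightarrow> real \<times> real) measure \<Rightarrow> policy \<Rightarrow> bool" where
  "admissible_policy \<Omega> d \<longleftrightarrow>
     (\<forall>k. d k \<in> measurable \<Omega> (count_space UNIV)) \<and>
     (\<forall>k w w'. (\<forall>i\<le>k. w i = w' i) \<longrightarrow> d k w = d k w')"

text \<open>Time at which the agent becomes idle just before the k-th proposal, starting idle at t.\<close>
fun idle_time :: "real \<Rightarrow> policy \<Rightarrow> (nat \<Rightarrow> real \<times> real) \<Rightarrow> nat \<Rightarrow> real" where
  "idle_time t d w 0 = t"
| "idle_time t d w (Suc k) =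
     idle_time t d w k + fst (w k) + (if d k w then snd (w k) else 0)"

definition proposal_time :: "real \<Rightarrow> policy \<Rightarrow> (nat \<Rightarrow> real \<times> real) \<Rightarrow> nat \<Rightarrow> real" where
  "proposal_time t d w k = idle_time t d w k + fst (w k)"

definition total_reward :: "real \<Rightarrow> (real \<Rightarrow> real) \<Rightarrow> real \<Rightarrow> policy \<Rightarrow> (nat \<Rightarrow> real \<times> real) \<Rightarrow> real" where
  "total_reward T r t d w =
     (\<Sum>k. if proposal_time t d w k \<le> T \<and> d k w then r (snd (w k)) else 0)"

definition value_fn :: "real \<Rightarrow> 'a measure \<Rightarrow> ('a \<Rightarrow> real) \<Rightarrow> (real \<Rightarrow> real) \<Rightarrow> real \<Rightarrow> real \<Rightarrow> real" where
  "value_fn l M X r T t =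
     (if T \<le> t then 0
      else (SUP d \<in> {d. admissible_policy (sample_space l M X) d}.
              integral\<^sup>L (sample_space l M X) (total_reward T r t d)))"

end

(*
  The value function is the fixed point u of the Bellman operator
    (B f)(t) = E[1{t + tau <= T} max (r(X) + f(t + tau + X), f(t + tau))],
  tau ~ Exp(l) being the idle time before the next proposal and X its duration.
  On functions on [a, infinity), B is a sup-norm contraction with factor P(a + tau <= T) < 1.
  The fixed point is the increasing limit of the iterates B^n 0. Conditioning on the first
  proposal shows that every admissible policy earns at most u, and that the feedback policy
  accepting a task x proposed at s iff r(x) + u(s + x) >= u(s) earns exactly u.
  Substituting s = t + tau in u = B u gives
    u(t) = e^(l t) int_t^T l e^(-l s) E[max (r(X) + u(s + X), u(s))] ds,
  whence the derivative. If Phi(c) = 0, then c (T - t)_+ and c (T - t + C) 1{t < T} are a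
  sub- and a supersolution of u = B u, so the contraction squeezes u between them; Phi is
  continuous and strictly decreasing, hence has exactly one root.
*)

theory Submission
  imports Defs
begin

lemma contraction_bound_nonpos:
  fixes \<psi> :: "'x \<Rightarrow> real"
  assumes p: "0 \<le> p" "p < 1" and bound: "\<forall>x\<in>A. \<psi> x \<le> B"
    and contract: "\<And>\<delta>. 0 \<le> \<delta> \<Longrightarrow> \<forall>x\<in>A. \<psi> x \<le> \<delta> \<Longrightarrow> \<forall>x\<in>A. \<psi> x \<le> p * \<delta>"
  shows "\<forall>x\<in>A. \<psi> x \<le> 0"
proof
  fix x assume x: "x \<in> A"
  have "\<forall>y\<in>A. \<psi> y \<le> p ^ n * max B 0" for n
  proof (induction n)
    case 0 then show ?case using bound by auto
  next
    case (Suc n)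
    have "0 \<le> p ^ n * max B 0" using p by simp
    from contract[OF this Suc] show ?case by (simp add: algebra_simps)
  qed
  moreover have "(\<lambda>n. p ^ n * max B 0) \<longlonglongrightarrow> 0 * max B 0"
    using p by (intro tendsto_intros) auto
  ultimately show "\<psi> x \<le> 0" using x by (auto intro: LIMSEQ_le_const)
qed

lemma abs_max_diff_le: "\<bar>max (a::real) b - max c d\<bar> \<le> max \<bar>a - c\<bar> \<bar>b - d\<bar>"
  by (auto simp: max_def abs_le_iff)

lemma measurable_pred_compose2:
  assumes "Measurable.pred (borel \<Otimes>\<^sub>M borel) (\<lambda>z. P (fst z) (snd z))"
    and "f \<in> borel_measurable N" "g \<in> borel_measurable N"
  shows "Measurable.pred N (\<lambda>x. P (f x) (g x))"
  using measurable_compose[OF measurable_Pair[OF assms(2,3)] assms(1)] by simp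

lemma AE_exponential_density_pos: "AE x in density lborel (exponential_density l). 0 < x"
proof -
  have "AE x in lborel. 0 < exponential_density l x \<longrightarrow> 0 < x"
    using AE_lborel_singleton[of 0] by eventually_elim (auto simp: exponential_density_def)
  then show ?thesis by (subst AE_density) auto
qed

lemma integral_exponential_density_truncated_affine:
  assumes l: "0 < l" and S: "0 \<le> S"
  shows "(\<integral>\<tau>. (if \<tau> \<le> S then \<alpha> * (S - \<tau>) + \<beta> else 0) \<partial>density lborel (exponential_density l))
     = \<alpha> * (S - (1 - exp (- l * S)) / l) + \<beta> * (1 - exp (- l * S))"
proof -
  define h where "h x = l * exp (- x * l) * (\<alpha> * (S - x) + \<beta>)" for x
  define F where "F x = \<alpha> * (exp (- x * l) / l - (S - x) * exp (- x * l)) - \<beta> * exp (- x * l)" for x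
  have "(\<integral>\<tau>. (if \<tau> \<le> S then \<alpha> * (S - \<tau>) + \<beta> else 0) \<partial>density lborel (exponential_density l))
      = (\<integral>x. exponential_density l x *\<^sub>R (if x \<le> S then \<alpha> * (S - x) + \<beta> else 0) \<partial>lborel)"
    by (subst integral_density) (auto simp: exponential_density_nonneg l)
  also have "\<dots> = (\<integral>x. indicator {0..S} x *\<^sub>R h x \<partial>lborel)"
    by (intro Bochner_Integration.integral_cong) (auto simp: exponential_density_def indicator_def h_def)
  also have "\<dots> = (LBINT x=ereal 0..ereal S. h x)"
    using interval_integral_Icc[OF S, of h] by (simp add: set_lebesgue_integral_def)
  also have "\<dots> = F S - F 0"
  proof (rule interval_integral_FTC_finite)
    show "continuous_on {min 0 S..max 0 S} h" unfolding h_def by (intro continuous_intros)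
    fix x
    have "(F has_real_derivative h x) (at x)"
      unfolding F_def h_def using l by (auto intro!: derivative_eq_intros simp: field_simps)
    then show "(F has_vector_derivative h x) (at x within {min 0 S..max 0 S})"
      by (simp add: has_real_derivative_iff_has_vector_derivative[symmetric] has_field_derivative_at_within)
  qed
  also have "\<dots> = \<alpha> * (S - (1 - exp (- l * S)) / l) + \<beta> * (1 - exp (- l * S))"
    unfolding F_def using l by (simp add: field_simps)
  finally show ?thesis .
qed

section \<open>The probability space of proposals\<close>

locale task_allocation = prob_space M for M :: "'a measure" +
  fixes X :: "'a \<Rightarrow> real" and r :: "real \<Rightarrow> real" and l C K T :: real
  assumes X_measurable[measurable]: "X \<in> borel_measurable M"
    and X_range: "\<And>\<omega>. \<omega> \<in> space M \<Longrightarrow> X \<omega> \<in> {0..C}"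
    and r_measurable[measurable]: "r \<in> borel_measurable borel"
    and r_bounded: "\<And>x. x \<in> {0..C} \<Longrightarrow> \<bar>r x\<bar> \<le> K"
    and l_pos: "0 < l"
begin

abbreviation "idle_law \<equiv> density lborel (exponential_density l)"
abbreviation "duration_law \<equiv> distr M borel X"
abbreviation "\<nu> \<equiv> task_measure l M X"
abbreviation "\<Omega> \<equiv> sample_space l M X"
abbreviation "admissible \<equiv> admissible_policy \<Omega>"

lemma C_nonneg: "0 \<le> C"
  using X_range not_empty by fastforce

lemma K_nonneg: "0 \<le> K"
  using r_bounded[of 0] C_nonneg by fastforce

lemma task_measure_eq: "\<nu> = idle_law \<Otimes>\<^sub>M duration_law"
  by (simp add: task_measure_def)

sublocale tasks: pair_prob_space idle_law duration_law
  using prob_space_exponential_density[OF l_pos] prob_space_distr[OF X_measurable]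
  by (simp add: pair_prob_space_def pair_sigma_finite_def prob_space_imp_sigma_finite)

lemma prob_space_task_measure: "prob_space \<nu>"
  unfolding task_measure_eq by (rule tasks.prob_space_axioms)

lemma sets_task_measure[measurable_cong]: "sets \<nu> = sets (borel \<Otimes>\<^sub>M borel)"
  unfolding task_measure_eq by (intro sets_pair_measure_cong) auto

lemma space_task_measure[simp]: "space \<nu> = UNIV"
  by (simp add: task_measure_eq space_pair_measure)

sublocale paths: sequence_space \<nu>
  using prob_space_task_measure
  by (auto simp: sequence_space_def product_prob_space_def product_sigma_finite_def
      product_prob_space_axioms_def prob_space_imp_sigma_finite)

lemma sample_space_eq: "\<Omega> = PiM UNIV (\<lambda>_. \<nu>)"
  by (simp add: sample_space_def)

sublocale first_step: pair_prob_space \<nu> \<Omega>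
  using prob_space_task_measure paths.prob_space_axioms
  by (simp add: sample_space_eq pair_prob_space_def pair_sigma_finite_def prob_space_imp_sigma_finite)

lemma measurable_case_nat_pair[measurable]:
  "(\<lambda>(s, \<omega>). case_nat s \<omega>) \<in> measurable (\<nu> \<Otimes>\<^sub>M \<Omega>) \<Omega>"
  unfolding sample_space_eq by measurable

lemma measurable_case_nat[measurable]: "(\<lambda>\<omega>. case_nat s \<omega>) \<in> measurable \<Omega> \<Omega>"
  unfolding sample_space_eq by measurable

lemma distr_case_nat: "distr (\<nu> \<Otimes>\<^sub>M \<Omega>) \<Omega> (\<lambda>(s, \<omega>). case_nat s \<omega>) = \<Omega>"
  unfolding sample_space_eq by (rule paths.PiM_iter)

lemma measurable_component[measurable]: "(\<lambda>\<omega>. \<omega> i) \<in> measurable \<Omega> \<nu>"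
  unfolding sample_space_eq by measurable

lemma measurable_fst_task[measurable]: "fst \<in> borel_measurable \<nu>"
  by (subst measurable_cong_sets[OF sets_task_measure refl]) measurable

lemma measurable_snd_task[measurable]: "snd \<in> borel_measurable \<nu>"
  by (subst measurable_cong_sets[OF sets_task_measure refl]) measurable

definition regular_task :: "real \<times> real \<Rightarrow> bool" where
  "regular_task w \<longleftrightarrow> 0 < fst w \<and> snd w \<in> {0..C}"

lemma measurable_regular_task[measurable]: "Measurable.pred (borel \<Otimes>\<^sub>M borel) regular_task"
  unfolding regular_task_def by measurable

lemma AE_regular_task: "AE w in \<nu>. regular_task w"
  unfolding task_measure_eq
proof (rule tasks.AE_pair_measure)
  show "{x \<in> space (idle_law \<Otimes>\<^sub>M duration_law). regular_task x} \<in> sets (idle_law \<Otimes>\<^sub>M duration_law)"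
    by measurable
  have durations: "AE y in duration_law. y \<in> {0..C}"
    by (subst AE_distr_iff) (use X_range in auto)
  show "AE x in idle_law. AE y in duration_law. regular_task (x, y)"
    using AE_exponential_density_pos[of l]
    by eventually_elim (use durations in \<open>auto simp: regular_task_def elim!: eventually_mono\<close>)
qed

lemma AE_regular_path: "AE \<omega> in \<Omega>. \<forall>i. regular_task (\<omega> i)"
  unfolding AE_all_countable sample_space_eq
  by (intro allI AE_PiM_component) (use prob_space_task_measure AE_regular_task in auto)

lemma integrable_task_bounded:
  fixes f :: "real \<times> real \<Rightarrow> real"
  assumes "f \<in> borel_measurable \<nu>" "AE w in \<nu>. \<bar>f w\<bar> \<le> B"
  shows "integrable \<nu> f"
  using assms prob_space_task_measure
  by (intro finite_measure.integrable_const_bound[where B=B]) (auto simp: prob_space_def)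

lemma integrable_bounded:
  fixes f :: "'a \<Rightarrow> real"
  assumes "f \<in> borel_measurable M" "\<And>\<omega>. \<omega> \<in> space M \<Longrightarrow> \<bar>f \<omega>\<bar> \<le> B"
  shows "integrable M f"
  using assms by (intro integrable_const_bound[where B=B]) auto

section \<open>Finitely many proposals before the horizon\<close>

definition idle_discount :: real where
  "idle_discount = (\<integral>w. exp (- max (fst w) 0) \<partial>\<nu>)"

lemma idle_discount_nonneg: "0 \<le> idle_discount"
  unfolding idle_discount_def by (rule Bochner_Integration.integral_nonneg) auto

lemma idle_discount_less_1: "idle_discount < 1"
proof -
  have int: "integrable \<nu> (\<lambda>w. 1 - exp (- max (fst w) 0))"
    by (rule integrable_task_bounded[where B=1]) auto
  have "(\<integral>w. 1 - exp (- max (fst w) 0) \<partial>\<nu>) = 1 - idle_discount"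
    unfolding idle_discount_def using paths.M.prob_space
    by (subst Bochner_Integration.integral_diff) (auto intro: integrable_task_bounded[where B=1])
  moreover have "(\<integral>w. 1 - exp (- max (fst w) 0) \<partial>\<nu>) \<noteq> 0"
  proof
    assume "(\<integral>w. 1 - exp (- max (fst w) 0) \<partial>\<nu>) = 0"
    then have "AE w in \<nu>. 1 - exp (- max (fst w) 0) = 0"
      using int by (subst (asm) integral_nonneg_eq_0_iff_AE) auto
    with AE_regular_task have "AE w in \<nu>. False"
      by eventually_elim (auto simp: regular_task_def)
    then show False by simp
  qed
  moreover have "0 \<le> (\<integral>w. 1 - exp (- max (fst w) 0) \<partial>\<nu>)"
    by (rule Bochner_Integration.integral_nonneg) auto
  ultimately show ?thesis by linarith
qed

text \<open>Idle times are positive only almost surely; the \<open>max\<close> keeps \<open>idle_sum\<close> nonnegative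
  everywhere.\<close>

definition idle_sum :: "nat \<Rightarrow> (nat \<Rightarrow> real \<times> real) \<Rightarrow> real" where
  "idle_sum k \<omega> = (\<Sum>i<k. max (fst (\<omega> i)) 0)"

lemma measurable_idle_sum[measurable]: "idle_sum k \<in> borel_measurable \<Omega>"
  unfolding idle_sum_def by measurable

lemma idle_sum_case_nat: "idle_sum (Suc k) (case_nat s \<omega>) = max (fst s) 0 + idle_sum k \<omega>"
  unfolding idle_sum_def by (subst sum.lessThan_Suc_shift) simp

lemma idle_sum_nonneg: "0 \<le> idle_sum k \<omega>"
  unfolding idle_sum_def by (intro sum_nonneg) auto

lemma nn_integral_exp_idle_sum:
  "(\<integral>\<^sup>+\<omega>. ennreal (exp (- idle_sum k \<omega>)) \<partial>\<Omega>) = ennreal idle_discount ^ k"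
proof (induction k)
  case 0
  show ?case by (simp add: idle_sum_def first_step.M2.emeasure_space_1)
next
  case (Suc k)
  have "(\<integral>\<^sup>+\<omega>. ennreal (exp (- idle_sum (Suc k) \<omega>)) \<partial>\<Omega>)
      = (\<integral>\<^sup>+z. ennreal (exp (- idle_sum (Suc k) (case_nat (fst z) (snd z)))) \<partial>(\<nu> \<Otimes>\<^sub>M \<Omega>))"
    by (subst (1) distr_case_nat[symmetric], subst nn_integral_distr) (auto simp: split_beta')
  also have "\<dots> = (\<integral>\<^sup>+z. ennreal (exp (- max (fst (fst z)) 0)) * ennreal (exp (- idle_sum k (snd z))) \<partial>(\<nu> \<Otimes>\<^sub>M \<Omega>))"
    by (intro nn_integral_cong)
       (auto simp: idle_sum_case_nat exp_add[symmetric] ennreal_mult[symmetric] algebra_simps)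
  also have "\<dots> = (\<integral>\<^sup>+s. \<integral>\<^sup>+\<omega>. ennreal (exp (- max (fst s) 0)) * ennreal (exp (- idle_sum k \<omega>)) \<partial>\<Omega> \<partial>\<nu>)"
    using first_step.M2.nn_integral_fst[of "\<lambda>z. ennreal (exp (- max (fst (fst z)) 0)) * ennreal (exp (- idle_sum k (snd z)))" \<nu>]
    by simp
  also have "\<dots> = (\<integral>\<^sup>+s. ennreal (exp (- max (fst s) 0)) \<partial>\<nu>) * ennreal idle_discount ^ k"
    by (subst nn_integral_cmult) (auto simp: Suc nn_integral_multc)
  also have "(\<integral>\<^sup>+s. ennreal (exp (- max (fst s) 0)) \<partial>\<nu>) = ennreal idle_discount"
    unfolding idle_discount_def
    by (subst nn_integral_eq_integral) (auto intro: integrable_task_bounded[where B=1])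
  finally show ?case by simp
qed

definition proposal_count :: "real \<Rightarrow> (nat \<Rightarrow> real \<times> real) \<Rightarrow> ennreal" where
  "proposal_count S \<omega> = (\<Sum>k. if idle_sum (Suc k) \<omega> \<le> S then 1 else 0)"

lemma measurable_proposal_count[measurable]: "proposal_count S \<in> borel_measurable \<Omega>"
  unfolding proposal_count_def by measurable

lemma proposal_count_mono: "S \<le> S' \<Longrightarrow> proposal_count S \<omega> \<le> proposal_count S' \<omega>"
  unfolding proposal_count_def by (intro suminf_le) auto

text \<open>Markov's inequality with the weight \<open>exp (S - idle_sum (Suc k))\<close> and the geometric
  decay of its expectation bound the expected number of proposals before \<open>S\<close>.\<close>

lemma nn_integral_proposal_count_finite: "(\<integral>\<^sup>+\<omega>. proposal_count S \<omega> \<partial>\<Omega>) < \<infinity>"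
proof -
  let ?q = idle_discount
  have "(\<integral>\<^sup>+\<omega>. proposal_count S \<omega> \<partial>\<Omega>) = (\<Sum>k. \<integral>\<^sup>+\<omega>. (if idle_sum (Suc k) \<omega> \<le> S then 1 else 0) \<partial>\<Omega>)"
    unfolding proposal_count_def by (rule nn_integral_suminf) measurable
  also have "\<dots> \<le> (\<Sum>k. ennreal (exp S) * ennreal (?q ^ Suc k))"
  proof (intro suminf_le allI)
    fix k
    have "(\<integral>\<^sup>+\<omega>. (if idle_sum (Suc k) \<omega> \<le> S then 1 else 0) \<partial>\<Omega>)
        \<le> (\<integral>\<^sup>+\<omega>. ennreal (exp S) * ennreal (exp (- idle_sum (Suc k) \<omega>)) \<partial>\<Omega>)"
    proof (intro nn_integral_mono)
      fix \<omega>
      have "idle_sum (Suc k) \<omega> \<le> S \<Longrightarrow> 1 \<le> exp S * exp (- idle_sum (Suc k) \<omega>)"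
        by (simp add: exp_add[symmetric])
      then show "(if idle_sum (Suc k) \<omega> \<le> S then 1 else 0) \<le> ennreal (exp S) * ennreal (exp (- idle_sum (Suc k) \<omega>))"
        by (auto simp: ennreal_mult[symmetric] ennreal_1[symmetric] simp del: ennreal_1 intro: ennreal_leI)
    qed
    also have "\<dots> = ennreal (exp S) * ennreal (?q ^ Suc k)"
      by (subst nn_integral_cmult)
         (auto simp: nn_integral_exp_idle_sum ennreal_power idle_discount_nonneg simp del: power_Suc)
    finally show "(\<integral>\<^sup>+\<omega>. (if idle_sum (Suc k) \<omega> \<le> S then 1 else 0) \<partial>\<Omega>) \<le> ennreal (exp S) * ennreal (?q ^ Suc k)" .
  qed auto
  also have "\<dots> = ennreal (exp S) * ennreal (\<Sum>k. ?q ^ Suc k)"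
    using idle_discount_nonneg idle_discount_less_1
    by (subst ennreal_suminf_cmult, subst suminf_ennreal2)
       (auto simp only: power_Suc intro!: summable_mult summable_geometric, auto)
  also have "\<dots> < \<infinity>"
    by (simp add: ennreal_mult_less_top del: power_Suc)
  finally show ?thesis .
qed

definition typical_path :: "(nat \<Rightarrow> real \<times> real) \<Rightarrow> bool" where
  "typical_path \<omega> \<longleftrightarrow> (\<forall>i. regular_task (\<omega> i)) \<and> (\<forall>S. proposal_count S \<omega> \<noteq> \<top>)"

lemma AE_typical_path: "AE \<omega> in \<Omega>. typical_path \<omega>"
proof -
  have "AE \<omega> in \<Omega>. \<forall>n::nat. proposal_count (real n) \<omega> \<noteq> \<top>"
    unfolding AE_all_countable
    using nn_integral_PInf_AE[of "proposal_count _" \<Omega>] nn_integral_proposal_count_finite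
    by (simp add: less_top)
  with AE_regular_path show ?thesis
  proof eventually_elim
    case (elim \<omega>)
    have "proposal_count S \<omega> \<noteq> \<top>" for S
    proof -
      have "proposal_count S \<omega> \<le> proposal_count (real (nat \<lceil>S\<rceil>)) \<omega>"
        by (intro proposal_count_mono) linarith
      then show ?thesis using elim(2) by (auto simp: top_unique)
    qed
    then show ?case using elim by (simp add: typical_path_def)
  qed
qed

lemma integrable_proposal_count: "integrable \<Omega> (\<lambda>\<omega>. enn2real (proposal_count S \<omega>))"
proof (rule integrableI_bounded)
  have "(\<integral>\<^sup>+\<omega>. ennreal (enn2real (proposal_count S \<omega>)) \<partial>\<Omega>) \<le> (\<integral>\<^sup>+\<omega>. proposal_count S \<omega> \<partial>\<Omega>)"
    by (intro nn_integral_mono) (simp add: ennreal_enn2real_if)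
  then show "(\<integral>\<^sup>+\<omega>. ennreal (norm (enn2real (proposal_count S \<omega>))) \<partial>\<Omega>) < \<infinity>"
    using nn_integral_proposal_count_finite[of S] by (simp add: le_less_trans)
qed simp

section \<open>The expected reward of a policy\<close>

lemma measurable_policy:
  "admissible d \<Longrightarrow> Measurable.pred \<Omega> (d k)"
  by (simp add: admissible_policy_def)

lemma policy_prefix:
  "admissible d \<Longrightarrow> (\<And>i. i \<le> k \<Longrightarrow> w i = w' i) \<Longrightarrow> d k w = d k w'"
  unfolding admissible_policy_def by blast

lemma measurable_idle_time:
  assumes "admissible d" shows "(\<lambda>\<omega>. idle_time t d \<omega> k) \<in> borel_measurable \<Omega>"
proof (induction k)
  case (Suc k)
  note [measurable] = measurable_policy[OF assms, of k] Suc
  show ?case by simp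
qed simp

lemma measurable_total_reward:
  assumes "admissible d" shows "total_reward T r t d \<in> borel_measurable \<Omega>"
proof -
  note [measurable] = measurable_policy[OF assms] measurable_idle_time[OF assms]
  show ?thesis unfolding total_reward_def[abs_def] proposal_time_def by measurable
qed

definition reward_term :: "real \<Rightarrow> policy \<Rightarrow> (nat \<Rightarrow> real \<times> real) \<Rightarrow> nat \<Rightarrow> real" where
  "reward_term t d \<omega> k = (if proposal_time t d \<omega> k \<le> T \<and> d k \<omega> then r (snd (\<omega> k)) else 0)"

lemma total_reward_eq_suminf: "total_reward T r t d \<omega> = suminf (reward_term t d \<omega>)"
  unfolding total_reward_def reward_term_def ..

lemma idle_time_ge:
  assumes "\<forall>i. regular_task (\<omega> i)" shows "t + idle_sum k \<omega> \<le> idle_time t d \<omega> k"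
proof (induction k)
  case (Suc k)
  have "0 < fst (\<omega> k)" "0 \<le> snd (\<omega> k)" using assms by (auto simp: regular_task_def)
  with Suc show ?case by (auto simp: idle_sum_def)
qed (simp add: idle_sum_def)

lemma proposal_time_ge:
  assumes "\<forall>i. regular_task (\<omega> i)" shows "t + idle_sum (Suc k) \<omega> \<le> proposal_time t d \<omega> k"
proof -
  have "0 < fst (\<omega> k)" using assms by (auto simp: regular_task_def)
  with idle_time_ge[OF assms, of t k d] show ?thesis by (auto simp: idle_sum_def proposal_time_def)
qed

lemma proposal_time_gt:
  assumes "\<forall>i. regular_task (\<omega> i)" shows "t < proposal_time t d \<omega> k"
proof -
  have "0 < fst (\<omega> k)" using assms by (auto simp: regular_task_def)
  then have "0 < idle_sum (Suc k) \<omega>"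
    using idle_sum_nonneg[of k \<omega>] by (simp add: idle_sum_def)
  with proposal_time_ge[OF assms, of t k d] show ?thesis by simp
qed

lemma abs_reward_term_le:
  assumes "\<forall>i. regular_task (\<omega> i)" "s \<le> t"
  shows "\<bar>reward_term t d \<omega> k\<bar> \<le> K * (if idle_sum (Suc k) \<omega> \<le> T - s then 1 else 0)"
proof -
  have "snd (\<omega> k) \<in> {0..C}" using assms by (auto simp: regular_task_def)
  then show ?thesis
    using proposal_time_ge[OF assms(1), of t k d] assms(2) r_bounded K_nonneg
    by (auto simp: reward_term_def)
qed

lemma
  assumes "typical_path \<omega>" "s \<le> t"
  shows summable_reward_term: "summable (reward_term t d \<omega>)"
    and abs_total_reward_le: "\<bar>total_reward T r t d \<omega>\<bar> \<le> K * enn2real (proposal_count (T - s) \<omega>)"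
proof -
  define ind where "ind k = (if idle_sum (Suc k) \<omega> \<le> T - s then 1 else 0 :: real)" for k
  have regular: "\<forall>i. regular_task (\<omega> i)" and finite: "proposal_count (T - s) \<omega> \<noteq> \<top>"
    using assms by (auto simp: typical_path_def)
  have count_eq: "proposal_count (T - s) \<omega> = (\<Sum>k. ennreal (ind k))"
    unfolding proposal_count_def ind_def by (intro suminf_cong) auto
  have ind_nonneg: "0 \<le> ind k" for k by (simp add: ind_def)
  have summable_ind: "summable ind"
    using finite by (intro summable_suminf_not_top) (auto simp: count_eq ind_nonneg)
  have "enn2real (proposal_count (T - s) \<omega>) = (\<Sum>k. ind k)"
    unfolding count_eq using summable_ind ind_nonneg suminf_nonneg[OF summable_ind]
    by (subst suminf_ennreal2) auto
  moreover have bound: "norm (reward_term t d \<omega> k) \<le> K * ind k" for k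
    using abs_reward_term_le[OF regular assms(2)] by (simp add: ind_def)
  moreover have summable_bound: "summable (\<lambda>k. K * ind k)"
    using summable_ind by (rule summable_mult)
  moreover have summable_norm_terms: "summable (\<lambda>k. norm (reward_term t d \<omega> k))"
    using summable_bound by (rule summable_comparison_test') (use bound in auto)
  ultimately show "summable (reward_term t d \<omega>)"
    and "\<bar>total_reward T r t d \<omega>\<bar> \<le> K * enn2real (proposal_count (T - s) \<omega>)"
    unfolding total_reward_eq_suminf
    using summable_norm[OF summable_norm_terms] suminf_le[OF bound summable_norm_terms summable_bound]
      summable_norm_cancel[OF summable_norm_terms]
    by (auto simp: suminf_mult)
qed

lemma integrable_total_reward:
  assumes "admissible d" shows "integrable \<Omega> (total_reward T r t d)"
proof (rule Bochner_Integration.integrable_bound)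
  show "integrable \<Omega> (\<lambda>\<omega>. K * enn2real (proposal_count (T - t) \<omega>))"
    using integrable_proposal_count by simp
  show "AE \<omega> in \<Omega>. norm (total_reward T r t d \<omega>) \<le> norm (K * enn2real (proposal_count (T - t) \<omega>))"
    using AE_typical_path by eventually_elim (use abs_total_reward_le K_nonneg in auto)
qed (rule measurable_total_reward[OF assms])

definition expected_reward :: "real \<Rightarrow> policy \<Rightarrow> real" where
  "expected_reward t d = (\<integral>\<omega>. total_reward T r t d \<omega> \<partial>\<Omega>)"

lemma abs_expected_reward_le:
  assumes "admissible d" "s \<le> t"
  shows "\<bar>expected_reward t d\<bar> \<le> K * (\<integral>\<omega>. enn2real (proposal_count (T - s) \<omega>) \<partial>\<Omega>)"
proof -
  have "\<bar>expected_reward t d\<bar> \<le> (\<integral>\<omega>. \<bar>total_reward T r t d \<omega>\<bar> \<partial>\<Omega>)"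
    unfolding expected_reward_def by (rule integral_abs_bound)
  also have "\<dots> \<le> (\<integral>\<omega>. K * enn2real (proposal_count (T - s) \<omega>) \<partial>\<Omega>)"
    using AE_typical_path integrable_proposal_count integrable_total_reward[OF assms(1)]
    by (intro integral_mono_AE) (auto elim!: eventually_mono intro: abs_total_reward_le assms(2))
  finally show ?thesis by simp
qed

lemma expected_reward_after_horizon:
  assumes "T \<le> t" shows "expected_reward t d = 0"
  unfolding expected_reward_def
proof (rule integral_eq_zero_AE)
  show "AE \<omega> in \<Omega>. total_reward T r t d \<omega> = 0"
    using AE_regular_path
  proof eventually_elim
    case (elim \<omega>)
    have "reward_term t d \<omega> k = 0" for k
      using proposal_time_gt[OF elim, of t d k] assms by (auto simp: reward_term_def)
    then have "reward_term t d \<omega> = (\<lambda>_. 0)" by auto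
    then show ?case by (simp add: total_reward_eq_suminf)
  qed
qed

section \<open>Conditioning on the first proposal\<close>

definition shift_policy :: "policy \<Rightarrow> real \<times> real \<Rightarrow> policy" where
  "shift_policy d w0 = (\<lambda>k \<omega>. d (Suc k) (case_nat w0 \<omega>))"

text \<open>For an admissible policy the first decision depends on the first task only, so any
  continuation of the path can be used to evaluate it.\<close>

definition first_decision :: "policy \<Rightarrow> real \<times> real \<Rightarrow> bool" where
  "first_decision d w0 = d 0 (case_nat w0 (\<lambda>_. w0))"

definition next_idle_time :: "real \<Rightarrow> policy \<Rightarrow> real \<times> real \<Rightarrow> real" where
  "next_idle_time t d w0 = t + fst w0 + (if first_decision d w0 then snd w0 else 0)"

definition first_reward :: "real \<Rightarrow> policy \<Rightarrow> real \<times> real \<Rightarrow> real" where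
  "first_reward t d w0 = (if t + fst w0 \<le> T \<and> first_decision d w0 then r (snd w0) else 0)"

lemma first_decision_eq: "admissible d \<Longrightarrow> d 0 (case_nat w0 \<omega>) = first_decision d w0"
  unfolding first_decision_def by (rule policy_prefix) auto

lemma idle_time_shift:
  "idle_time t d (case_nat w0 \<omega>) (Suc k) =
   idle_time (t + fst w0 + (if d 0 (case_nat w0 \<omega>) then snd w0 else 0)) (shift_policy d w0) \<omega> k"
  by (induction k) (auto simp: shift_policy_def)

lemma reward_term_shift:
  "reward_term t d (case_nat w0 \<omega>) (Suc k) =
   reward_term (t + fst w0 + (if d 0 (case_nat w0 \<omega>) then snd w0 else 0)) (shift_policy d w0) \<omega> k"
  by (simp add: reward_term_def proposal_time_def idle_time_shift shift_policy_def del: idle_time.simps)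

lemma total_reward_shift:
  assumes "admissible d" "summable (reward_term t d (case_nat w0 \<omega>))"
  shows "total_reward T r t d (case_nat w0 \<omega>)
       = first_reward t d w0 + total_reward T r (next_idle_time t d w0) (shift_policy d w0) \<omega>"
proof -
  have "total_reward T r (next_idle_time t d w0) (shift_policy d w0) \<omega>
      = (\<Sum>k. reward_term t d (case_nat w0 \<omega>) (Suc k))"
    unfolding total_reward_eq_suminf reward_term_shift next_idle_time_def first_decision_eq[OF assms(1)] ..
  also have "\<dots> = total_reward T r t d (case_nat w0 \<omega>) - reward_term t d (case_nat w0 \<omega>) 0"
    unfolding total_reward_eq_suminf by (rule suminf_split_head[OF assms(2)])
  also have "reward_term t d (case_nat w0 \<omega>) 0 = first_reward t d w0"
    by (simp add: reward_term_def first_reward_def proposal_time_def first_decision_eq[OF assms(1)])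
  finally show ?thesis by simp
qed

lemma admissible_shift_policy:
  assumes "admissible d" shows "admissible (shift_policy d w0)"
  unfolding admissible_policy_def
proof (intro conjI allI impI)
  fix k
  show "shift_policy d w0 k \<in> measurable \<Omega> (count_space UNIV)"
    unfolding shift_policy_def by (rule measurable_compose[OF measurable_case_nat measurable_policy[OF assms]])
  fix w w' :: "nat \<Rightarrow> real \<times> real"
  assume "\<forall>i\<le>k. w i = w' i"
  then show "shift_policy d w0 k w = shift_policy d w0 k w'"
    unfolding shift_policy_def by (intro policy_prefix[OF assms]) (auto split: nat.split)
qed

definition conditional_reward :: "real \<Rightarrow> policy \<Rightarrow> real \<times> real \<Rightarrow> real" where
  "conditional_reward t d w0 = (\<integral>\<omega>. total_reward T r t d (case_nat w0 \<omega>) \<partial>\<Omega>)"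

lemma expected_reward_first_step:
  assumes "admissible d"
  shows "expected_reward t d = (\<integral>w. conditional_reward t d w \<partial>\<nu>)"
    and "integrable \<nu> (conditional_reward t d)"
    and "AE w in \<nu>. conditional_reward t d w
           = first_reward t d w + expected_reward (next_idle_time t d w) (shift_policy d w)"
proof -
  have [measurable]: "total_reward T r t d \<in> borel_measurable \<Omega>"
    by (rule measurable_total_reward[OF assms])
  have "integrable (distr (\<nu> \<Otimes>\<^sub>M \<Omega>) \<Omega> (\<lambda>(s, \<omega>). case_nat s \<omega>)) (total_reward T r t d)"
    using integrable_total_reward[OF assms, of t] by (simp only: distr_case_nat)
  then have int: "integrable (\<nu> \<Otimes>\<^sub>M \<Omega>) (\<lambda>z. total_reward T r t d (case_nat (fst z) (snd z)))"
    by (subst (asm) integrable_distr_eq) (auto simp: split_beta')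
  have "expected_reward t d = (\<integral>\<omega>. total_reward T r t d \<omega> \<partial>distr (\<nu> \<Otimes>\<^sub>M \<Omega>) \<Omega> (\<lambda>(s, \<omega>). case_nat s \<omega>))"
    unfolding expected_reward_def by (simp only: distr_case_nat)
  also have "\<dots> = (\<integral>z. total_reward T r t d (case_nat (fst z) (snd z)) \<partial>(\<nu> \<Otimes>\<^sub>M \<Omega>))"
    by (subst integral_distr) (auto simp: split_beta')
  finally show "expected_reward t d = (\<integral>w. conditional_reward t d w \<partial>\<nu>)"
    unfolding conditional_reward_def using first_step.integral_fst'[OF int] by simp
  show "integrable \<nu> (conditional_reward t d)"
    unfolding conditional_reward_def using first_step.integrable_fst'[OF int] by simp
  have "AE \<omega> in distr (\<nu> \<Otimes>\<^sub>M \<Omega>) \<Omega> (\<lambda>(s, \<omega>). case_nat s \<omega>). typical_path \<omega>"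
    using AE_typical_path by (simp only: distr_case_nat)
  then have "AE z in \<nu> \<Otimes>\<^sub>M \<Omega>. typical_path (case_nat (fst z) (snd z))"
    by (auto dest: AE_distrD[OF measurable_case_nat_pair] simp: split_beta')
  then have "AE w in \<nu>. AE \<omega> in \<Omega>. typical_path (case_nat w \<omega>)"
    using first_step.AE_pair by fastforce
  then show "AE w in \<nu>. conditional_reward t d w
           = first_reward t d w + expected_reward (next_idle_time t d w) (shift_policy d w)"
  proof eventually_elim
    case (elim w)
    have "conditional_reward t d w
        = (\<integral>\<omega>. first_reward t d w + total_reward T r (next_idle_time t d w) (shift_policy d w) \<omega> \<partial>\<Omega>)"
      unfolding conditional_reward_def
      using elim measurable_total_reward[OF admissible_shift_policy[OF assms]]
      by (intro integral_cong_AE)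
         (auto elim!: eventually_mono intro: total_reward_shift[OF assms summable_reward_term])
    also have "\<dots> = first_reward t d w + expected_reward (next_idle_time t d w) (shift_policy d w)"
      unfolding expected_reward_def using integrable_total_reward[OF admissible_shift_policy[OF assms]]
      by (subst Bochner_Integration.integral_add) (auto simp: first_step.M2.prob_space)
    finally show ?case .
  qed
qed

section \<open>Feedback policies\<close>

definition feedback_step :: "(real \<Rightarrow> real \<Rightarrow> bool) \<Rightarrow> real \<Rightarrow> real \<times> real \<Rightarrow> real" where
  "feedback_step \<phi> s w = s + fst w + (if \<phi> (s + fst w) (snd w) then snd w else 0)"

text \<open>\<open>feedback_idle \<phi> s\<close> computes in advance the idle times of \<open>feedback_policy \<phi> s\<close>,
  which avoids a circular definition of the policy.\<close>

fun feedback_idle :: "(real \<Rightarrow> real \<Rightarrow> bool) \<Rightarrow> real \<Rightarrow> nat \<Rightarrow> (nat \<Rightarrow> real \<times> real) \<Rightarrow> real" where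
  "feedback_idle \<phi> s 0 \<omega> = s"
| "feedback_idle \<phi> s (Suc k) \<omega> = feedback_step \<phi> (feedback_idle \<phi> s k \<omega>) (\<omega> k)"

definition feedback_policy :: "(real \<Rightarrow> real \<Rightarrow> bool) \<Rightarrow> real \<Rightarrow> policy" where
  "feedback_policy \<phi> s = (\<lambda>k \<omega>. \<phi> (feedback_idle \<phi> s k \<omega> + fst (\<omega> k)) (snd (\<omega> k)))"

lemma feedback_idle_Suc_shift:
  "feedback_idle \<phi> s (Suc k) \<omega> = feedback_idle \<phi> (feedback_step \<phi> s (\<omega> 0)) k (\<lambda>i. \<omega> (Suc i))"
  by (induction k) simp_all

lemma measurable_feedback_idle:
  assumes \<phi>: "Measurable.pred (borel \<Otimes>\<^sub>M borel) (\<lambda>z. \<phi> (fst z) (snd z))"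
  shows "(\<lambda>\<omega>. feedback_idle \<phi> s k \<omega>) \<in> borel_measurable \<Omega>"
proof (induction k)
  case (Suc k)
  note [measurable] = Suc
  have [measurable]: "Measurable.pred \<Omega> (\<lambda>\<omega>. \<phi> (feedback_idle \<phi> s k \<omega> + fst (\<omega> k)) (snd (\<omega> k)))"
    by (rule measurable_pred_compose2[OF \<phi>]) measurable
  show ?case unfolding feedback_idle.simps feedback_step_def by measurable
qed simp

lemma feedback_idle_prefix:
  "(\<And>i. i < k \<Longrightarrow> \<omega> i = \<omega>' i) \<Longrightarrow> feedback_idle \<phi> s k \<omega> = feedback_idle \<phi> s k \<omega>'"
  by (induction k) auto

lemma admissible_feedback_policy:
  assumes \<phi>: "Measurable.pred (borel \<Otimes>\<^sub>M borel) (\<lambda>z. \<phi> (fst z) (snd z))"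
  shows "admissible (feedback_policy \<phi> s)"
  unfolding admissible_policy_def
proof (intro conjI allI impI)
  fix k
  show "feedback_policy \<phi> s k \<in> measurable \<Omega> (count_space UNIV)"
    unfolding feedback_policy_def
    by (rule measurable_pred_compose2[OF \<phi>]) (use measurable_feedback_idle[OF \<phi>] in measurable)
  fix w w' :: "nat \<Rightarrow> real \<times> real"
  assume "\<forall>i\<le>k. w i = w' i"
  moreover from this have "feedback_idle \<phi> s k w = feedback_idle \<phi> s k w'"
    by (intro feedback_idle_prefix) auto
  ultimately show "feedback_policy \<phi> s k w = feedback_policy \<phi> s k w'"
    unfolding feedback_policy_def by simp
qed

lemma shift_feedback_policy:
  "shift_policy (feedback_policy \<phi> s) w0 = feedback_policy \<phi> (feedback_step \<phi> s w0)"
  unfolding shift_policy_def feedback_policy_def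
  by (auto simp: fun_eq_iff feedback_idle_Suc_shift simp del: feedback_idle.simps(2))

lemma first_decision_feedback_policy:
  "first_decision (feedback_policy \<phi> s) w0 = \<phi> (s + fst w0) (snd w0)"
  by (simp add: first_decision_def feedback_policy_def)

lemma next_idle_time_feedback_policy:
  "next_idle_time s (feedback_policy \<phi> s) w0 = feedback_step \<phi> s w0"
  by (simp add: next_idle_time_def first_decision_feedback_policy feedback_step_def)

section \<open>The Bellman operator\<close>

lemma integral_task_fst:
  fixes g :: "real \<Rightarrow> real"
  assumes [measurable]: "g \<in> borel_measurable borel"
  shows "(\<integral>w. g (fst w) \<partial>\<nu>) = (\<integral>\<tau>. g \<tau> \<partial>idle_law)"
proof -
  have "(\<integral>\<tau>. g \<tau> \<partial>idle_law) = (\<integral>\<tau>. g \<tau> \<partial>distr (idle_law \<Otimes>\<^sub>M duration_law) idle_law fst)"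
    by (simp add: tasks.M2.distr_pair_fst)
  also have "\<dots> = (\<integral>w. g (fst w) \<partial>(idle_law \<Otimes>\<^sub>M duration_law))"
    by (subst integral_distr) auto
  finally show ?thesis by (simp add: task_measure_eq)
qed

lemma integral_task_product:
  fixes g h :: "real \<Rightarrow> real"
  assumes [measurable]: "g \<in> borel_measurable borel" "h \<in> borel_measurable borel"
    and g_bounded: "\<And>x. \<bar>g x\<bar> \<le> Bg" and h_bounded: "\<And>y. y \<in> {0..C} \<Longrightarrow> \<bar>h y\<bar> \<le> Bh"
  shows "(\<integral>w. g (fst w) * h (snd w) \<partial>\<nu>) = (\<integral>\<tau>. g \<tau> \<partial>idle_law) * (\<integral>\<omega>. h (X \<omega>) \<partial>M)"
proof -
  have "integrable \<nu> (\<lambda>w. g (fst w) * h (snd w))"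
  proof (rule integrable_task_bounded[where B="Bg * Bh"])
    show "AE w in \<nu>. \<bar>g (fst w) * h (snd w)\<bar> \<le> Bg * Bh"
      using AE_regular_task
    proof eventually_elim
      case (elim w)
      then have "\<bar>h (snd w)\<bar> \<le> Bh" by (intro h_bounded) (auto simp: regular_task_def)
      then show ?case using g_bounded[of "fst w"] by (simp add: abs_mult) (rule mult_mono, auto)
    qed
  qed measurable
  then have int: "integrable (idle_law \<Otimes>\<^sub>M duration_law) (\<lambda>w. g (fst w) * h (snd w))"
    by (simp add: task_measure_eq)
  have "(\<integral>w. g (fst w) * h (snd w) \<partial>\<nu>) = (\<integral>\<tau>. (\<integral>y. g \<tau> * h y \<partial>duration_law) \<partial>idle_law)"
    using tasks.integral_fst'[OF int] by (simp add: task_measure_eq)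
  also have "\<dots> = (\<integral>\<tau>. g \<tau> \<partial>idle_law) * (\<integral>y. h y \<partial>duration_law)" by simp
  also have "(\<integral>y. h y \<partial>duration_law) = (\<integral>\<omega>. h (X \<omega>) \<partial>M)" by (subst integral_distr) auto
  finally show ?thesis .
qed

text \<open>The contraction factor of the Bellman operator on functions on \<open>{a..}\<close>.\<close>

definition proposal_prob :: "real \<Rightarrow> real" where
  "proposal_prob a = (\<integral>w. (if a + fst w \<le> T then 1 else 0) \<partial>\<nu>)"

lemma proposal_prob_nonneg: "0 \<le> proposal_prob a"
  unfolding proposal_prob_def by (rule Bochner_Integration.integral_nonneg) auto

lemma proposal_prob_less_1: "proposal_prob a < 1"
proof -
  have eq: "proposal_prob a = (\<integral>\<tau>. (if \<tau> \<le> T - a then 0 * (T - a - \<tau>) + 1 else 0) \<partial>idle_law)"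
    unfolding proposal_prob_def
    by (subst integral_task_fst[symmetric]) (auto intro!: Bochner_Integration.integral_cong)
  show ?thesis
  proof (cases "a \<le> T")
    case True
    then show ?thesis
      unfolding eq by (subst integral_exponential_density_truncated_affine) (use l_pos in auto)
  next
    case False
    have "proposal_prob a = 0" unfolding eq
      by (rule integral_eq_zero_AE) (use AE_exponential_density_pos[of l] False in \<open>auto elim!: eventually_mono\<close>)
    then show ?thesis by simp
  qed
qed

lemma integral_le_proposal_prob:
  fixes g :: "real \<times> real \<Rightarrow> real"
  assumes "integrable \<nu> g" "0 \<le> \<delta>" "AE w in \<nu>. g w \<le> \<delta> * (if a + fst w \<le> T then 1 else 0)"
  shows "(\<integral>w. g w \<partial>\<nu>) \<le> \<delta> * proposal_prob a"
proof -
  have "(\<integral>w. g w \<partial>\<nu>) \<le> (\<integral>w. \<delta> * (if a + fst w \<le> T then 1 else 0) \<partial>\<nu>)"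
  proof (rule integral_mono_AE[OF assms(1) _ assms(3)])
    show "integrable \<nu> (\<lambda>w. \<delta> * (if a + fst w \<le> T then 1 else 0))"
      by (rule integrable_task_bounded[where B=\<delta>]) (use assms(2) in auto)
  qed
  then show ?thesis by (simp add: proposal_prob_def)
qed

definition bellman_integrand :: "(real \<Rightarrow> real) \<Rightarrow> real \<Rightarrow> real \<times> real \<Rightarrow> real" where
  "bellman_integrand f t w =
     (if t + fst w \<le> T then max (r (snd w) + f (t + fst w + snd w)) (f (t + fst w)) else 0)"

definition bellman :: "(real \<Rightarrow> real) \<Rightarrow> real \<Rightarrow> real" where
  "bellman f t = (\<integral>w. bellman_integrand f t w \<partial>\<nu>)"

definition tail_bounded :: "(real \<Rightarrow> real) \<Rightarrow> bool" where
  "tail_bounded f \<longleftrightarrow> f \<in> borel_measurable borel \<and> (\<forall>a. \<exists>B. \<forall>s\<ge>a. \<bar>f s\<bar> \<le> B)"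

lemma tail_boundedD: "tail_bounded f \<Longrightarrow> \<exists>B. \<forall>s\<ge>a. \<bar>f s\<bar> \<le> B"
  unfolding tail_bounded_def by blast

lemma tail_bounded_measurable: "tail_bounded f \<Longrightarrow> f \<in> borel_measurable borel"
  unfolding tail_bounded_def by blast

lemma tail_bounded_between:
  assumes "tail_bounded g" "\<And>s. 0 \<le> f s" "\<And>s. f s \<le> g s" "f \<in> borel_measurable borel"
  shows "tail_bounded f"
  unfolding tail_bounded_def
proof (intro conjI allI)
  fix a
  obtain B where "\<forall>s\<ge>a. \<bar>g s\<bar> \<le> B" using tail_boundedD[OF assms(1)] by blast
  then have "\<forall>s\<ge>a. \<bar>f s\<bar> \<le> B" using assms(2,3) by (metis abs_of_nonneg order_trans abs_ge_self)
  then show "\<exists>B. \<forall>s\<ge>a. \<bar>f s\<bar> \<le> B" by blast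
qed (fact assms(4))

lemma measurable_bellman_integrand_pair:
  assumes [measurable]: "f \<in> borel_measurable borel"
  shows "(\<lambda>z. bellman_integrand f (fst z) (snd z)) \<in> borel_measurable (borel \<Otimes>\<^sub>M \<nu>)"
proof -
  have "sets (borel \<Otimes>\<^sub>M \<nu>) = sets (borel \<Otimes>\<^sub>M (borel \<Otimes>\<^sub>M borel))"
    by (intro sets_pair_measure_cong sets_task_measure) auto
  then show ?thesis unfolding bellman_integrand_def
    by (subst measurable_cong_sets[where M'="borel \<Otimes>\<^sub>M (borel \<Otimes>\<^sub>M borel)"]) (auto, measurable)
qed

lemma measurable_bellman_integrand:
  assumes [measurable]: "f \<in> borel_measurable borel"
  shows "bellman_integrand f t \<in> borel_measurable \<nu>"
  unfolding bellman_integrand_def by measurable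

lemma abs_bellman_integrand_le:
  assumes "\<forall>s\<ge>t. \<bar>f s\<bar> \<le> B" "regular_task w"
  shows "\<bar>bellman_integrand f t w\<bar> \<le> K + B"
proof -
  have w: "0 < fst w" "snd w \<in> {0..C}" using assms(2) by (auto simp: regular_task_def)
  have "\<bar>r (snd w)\<bar> \<le> K" using w(2) by (rule r_bounded)
  moreover have "\<bar>f (t + fst w + snd w)\<bar> \<le> B" "\<bar>f (t + fst w)\<bar> \<le> B"
    using assms(1) w by auto
  ultimately show ?thesis using K_nonneg unfolding bellman_integrand_def by (auto simp: abs_le_iff)
qed

lemma integrable_bellman_integrand:
  assumes "tail_bounded f" shows "integrable \<nu> (bellman_integrand f t)"
proof -
  obtain B where B: "\<forall>s\<ge>t. \<bar>f s\<bar> \<le> B" using tail_boundedD[OF assms] by blast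
  show ?thesis
    using assms AE_regular_task
    by (intro integrable_task_bounded[where B="K + B"] measurable_bellman_integrand)
       (auto simp: tail_bounded_def elim!: eventually_mono intro: abs_bellman_integrand_le[OF B])
qed

lemma bellman_after_horizon: "T \<le> t \<Longrightarrow> bellman f t = 0"
  unfolding bellman_def
  by (rule integral_eq_zero_AE)
     (use AE_regular_task in \<open>auto elim!: eventually_mono simp: bellman_integrand_def regular_task_def\<close>)

lemma tail_bounded_bellman:
  assumes f: "tail_bounded f" shows "tail_bounded (bellman f)"
  unfolding tail_bounded_def
proof (intro conjI allI)
  show "bellman f \<in> borel_measurable borel"
    unfolding bellman_def[abs_def]
    by (rule paths.M.borel_measurable_lebesgue_integral)
       (use measurable_bellman_integrand_pair[OF tail_bounded_measurable[OF f]] in \<open>simp add: split_beta'\<close>)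
  fix a
  obtain B where B: "\<forall>s\<ge>a. \<bar>f s\<bar> \<le> B" using tail_boundedD[OF f] by blast
  have "\<bar>bellman f t\<bar> \<le> K + B" if "a \<le> t" for t
  proof -
    have "\<bar>bellman f t\<bar> \<le> (\<integral>w. \<bar>bellman_integrand f t w\<bar> \<partial>\<nu>)"
      unfolding bellman_def by (rule integral_abs_bound)
    also have "\<dots> \<le> (\<integral>w. K + B \<partial>\<nu>)"
      using AE_regular_task integrable_bellman_integrand[OF f] B that
      by (intro integral_mono_AE) (auto elim!: eventually_mono intro!: abs_bellman_integrand_le)
    finally show ?thesis using paths.M.prob_space by simp
  qed
  then show "\<exists>B. \<forall>s\<ge>a. \<bar>bellman f s\<bar> \<le> B" by blast
qed

lemma bellman_mono:
  assumes "tail_bounded f" "tail_bounded g" "\<forall>s\<ge>t. f s \<le> g s" shows "bellman f t \<le> bellman g t"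
  unfolding bellman_def
proof (rule integral_mono_AE[OF integrable_bellman_integrand[OF assms(1)] integrable_bellman_integrand[OF assms(2)]])
  show "AE w in \<nu>. bellman_integrand f t w \<le> bellman_integrand g t w"
    using AE_regular_task
  proof eventually_elim
    case (elim w)
    then have "0 < fst w" "0 \<le> snd w" by (auto simp: regular_task_def)
    then have "f (t + fst w + snd w) \<le> g (t + fst w + snd w)" "f (t + fst w) \<le> g (t + fst w)"
      using assms(3) by auto
    then show ?case unfolding bellman_integrand_def by auto
  qed
qed

lemma bellman_nonneg: "(\<And>s. 0 \<le> f s) \<Longrightarrow> 0 \<le> bellman f t"
  unfolding bellman_def
  by (rule Bochner_Integration.integral_nonneg) (auto simp: bellman_integrand_def intro: max.coboundedI2)

lemma bellman_diff_le:
  assumes "tail_bounded f" "tail_bounded g" "a \<le> t" "0 \<le> \<delta>" "\<forall>s\<ge>a. f s - g s \<le> \<delta>"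
  shows "bellman f t - bellman g t \<le> \<delta> * proposal_prob a"
proof -
  have int: "integrable \<nu> (\<lambda>w. bellman_integrand f t w - bellman_integrand g t w)"
    using integrable_bellman_integrand[OF assms(1)] integrable_bellman_integrand[OF assms(2)] by simp
  have "AE w in \<nu>. bellman_integrand f t w - bellman_integrand g t w \<le> \<delta> * (if a + fst w \<le> T then 1 else 0)"
    using AE_regular_task
  proof eventually_elim
    case (elim w)
    then have "0 < fst w" "0 \<le> snd w" by (auto simp: regular_task_def)
    then have "f (t + fst w + snd w) - g (t + fst w + snd w) \<le> \<delta>" "f (t + fst w) - g (t + fst w) \<le> \<delta>"
      using assms(3,5) by auto
    then show ?case unfolding bellman_integrand_def using assms(3,4) by (auto simp: max_def)
  qed
  then have "(\<integral>w. bellman_integrand f t w - bellman_integrand g t w \<partial>\<nu>) \<le> \<delta> * proposal_prob a"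
    by (rule integral_le_proposal_prob[OF int assms(4)])
  then show ?thesis
    unfolding bellman_def
    using integrable_bellman_integrand[OF assms(1)] integrable_bellman_integrand[OF assms(2)] by simp
qed

section \<open>Linear sub- and supersolutions\<close>

definition excess_reward :: "real \<Rightarrow> real" where
  "excess_reward c = (\<integral>\<omega>. max (r (X \<omega>) - c * X \<omega>) 0 \<partial>M)"

lemma abs_excess_le:
  assumes "y \<in> {0..C}" "0 \<le> c" shows "\<bar>max (r y - c * y) 0\<bar> \<le> K"
proof -
  have "0 \<le> c * y" using assms by simp
  then show ?thesis using r_bounded[OF assms(1)] K_nonneg by (auto simp: abs_le_iff max_def)
qed

lemma integrable_excess:
  assumes "0 \<le> c" shows "integrable M (\<lambda>\<omega>. max (r (X \<omega>) - c * X \<omega>) 0)"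
proof (rule integrable_bounded[where B=K])
  show "\<bar>max (r (X \<omega>) - c * X \<omega>) 0\<bar> \<le> K" if "\<omega> \<in> space M" for \<omega>
    using abs_excess_le[OF X_range[OF that] assms] .
qed measurable

lemma excess_reward_nonneg: "0 \<le> excess_reward c"
  unfolding excess_reward_def by (rule Bochner_Integration.integral_nonneg) auto

lemma excess_reward_le: "0 \<le> c \<Longrightarrow> excess_reward c \<le> K"
  unfolding excess_reward_def
  by (rule integral_le_const[OF integrable_excess], assumption, rule AE_I2)
     (use abs_excess_le[OF X_range] in \<open>auto simp: abs_le_iff\<close>)

lemma excess_reward_antimono: "0 \<le> c \<Longrightarrow> c \<le> c' \<Longrightarrow> excess_reward c' \<le> excess_reward c"
  unfolding excess_reward_def
proof (rule integral_mono)
  assume c: "0 \<le> c" "c \<le> c'"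
  then show "integrable M (\<lambda>\<omega>. max (r (X \<omega>) - c' * X \<omega>) 0)" "integrable M (\<lambda>\<omega>. max (r (X \<omega>) - c * X \<omega>) 0)"
    by (auto intro: integrable_excess)
  fix \<omega> assume "\<omega> \<in> space M"
  then have "c * X \<omega> \<le> c' * X \<omega>" using c X_range by (intro mult_right_mono) auto
  then show "max (r (X \<omega>) - c' * X \<omega>) 0 \<le> max (r (X \<omega>) - c * X \<omega>) 0" by auto
qed

lemma excess_reward_lipschitz:
  assumes "0 \<le> c" "0 \<le> c'" shows "\<bar>excess_reward c - excess_reward c'\<bar> \<le> C * \<bar>c - c'\<bar>"
proof -
  have "\<bar>excess_reward c - excess_reward c'\<bar>
      = \<bar>\<integral>\<omega>. max (r (X \<omega>) - c * X \<omega>) 0 - max (r (X \<omega>) - c' * X \<omega>) 0 \<partial>M\<bar>"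
    unfolding excess_reward_def using integrable_excess assms by simp
  also have "\<dots> \<le> (\<integral>\<omega>. \<bar>max (r (X \<omega>) - c * X \<omega>) 0 - max (r (X \<omega>) - c' * X \<omega>) 0\<bar> \<partial>M)"
    by (rule integral_abs_bound)
  also have "\<dots> \<le> C * \<bar>c - c'\<bar>"
  proof (rule integral_le_const)
    show "integrable M (\<lambda>\<omega>. \<bar>max (r (X \<omega>) - c * X \<omega>) 0 - max (r (X \<omega>) - c' * X \<omega>) 0\<bar>)"
      using integrable_excess assms by simp
    show "AE \<omega> in M. \<bar>max (r (X \<omega>) - c * X \<omega>) 0 - max (r (X \<omega>) - c' * X \<omega>) 0\<bar> \<le> C * \<bar>c - c'\<bar>"
    proof (rule AE_I2)
      fix \<omega> assume "\<omega> \<in> space M"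
      then have x: "X \<omega> \<in> {0..C}" by (rule X_range)
      have "\<bar>max (r (X \<omega>) - c * X \<omega>) 0 - max (r (X \<omega>) - c' * X \<omega>) 0\<bar> \<le> \<bar>c * X \<omega> - c' * X \<omega>\<bar>"
        by (auto simp: max_def abs_le_iff)
      also have "\<dots> = \<bar>c - c'\<bar> * X \<omega>"
        using x by (simp add: left_diff_distrib[symmetric] abs_mult)
      also have "\<dots> \<le> C * \<bar>c - c'\<bar>"
        using x mult_right_mono[of "X \<omega>" C "\<bar>c - c'\<bar>"] by (simp add: mult.commute)
      finally show "\<bar>max (r (X \<omega>) - c * X \<omega>) 0 - max (r (X \<omega>) - c' * X \<omega>) 0\<bar> \<le> C * \<bar>c - c'\<bar>" .
    qed
  qed
  finally show ?thesis .
qed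

lemma integrable_truncated_affine:
  assumes c: "0 \<le> c" and S: "0 \<le> S"
  shows "integrable \<nu> (\<lambda>w. if fst w \<le> S then c * (S - fst w) + \<beta> else 0)"
proof (rule integrable_task_bounded[where B="c * S + \<bar>\<beta>\<bar>"])
  show "AE w in \<nu>. \<bar>if fst w \<le> S then c * (S - fst w) + \<beta> else 0\<bar> \<le> c * S + \<bar>\<beta>\<bar>"
    using AE_regular_task
  proof eventually_elim
    case (elim w)
    then have "0 < fst w" by (simp add: regular_task_def)
    show ?case
    proof (cases "fst w \<le> S")
      case True
      then have "0 \<le> c * (S - fst w)" "c * (S - fst w) \<le> c * S"
        using c \<open>0 < fst w\<close> by (auto intro!: mult_left_mono)
      then show ?thesis using True abs_ge_self[of \<beta>] abs_ge_minus_self[of \<beta>] by (simp add: abs_le_iff)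
    qed (use S c in simp)
  qed
qed measurable

lemma integrable_truncated_excess:
  assumes "0 \<le> c"
  shows "integrable \<nu> (\<lambda>w. (if fst w \<le> S then 1 else 0) * max (r (snd w) - c * snd w) 0)"
proof (rule integrable_task_bounded[where B=K])
  show "AE w in \<nu>. \<bar>(if fst w \<le> S then 1 else 0) * max (r (snd w) - c * snd w) 0\<bar> \<le> K"
    using AE_regular_task
    by eventually_elim (use abs_excess_le[of _ c] assms K_nonneg in \<open>auto simp: regular_task_def\<close>)
qed measurable

lemma integral_truncated_excess:
  assumes c: "0 \<le> c" and S: "0 \<le> S"
  shows "(\<integral>w. (if fst w \<le> S then 1 else 0) * max (r (snd w) - c * snd w) 0 \<partial>\<nu>)
       = (1 - exp (- l * S)) * excess_reward c"
proof -
  have "(\<integral>w. (if fst w \<le> S then 1 else 0) * max (r (snd w) - c * snd w) 0 \<partial>\<nu>)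
      = (\<integral>\<tau>. (if \<tau> \<le> S then 1 else 0) \<partial>idle_law) * excess_reward c"
    unfolding excess_reward_def
    by (rule integral_task_product[where Bg=1 and Bh=K]) (use abs_excess_le c in auto)
  also have "(\<integral>\<tau>. (if \<tau> \<le> S then 1 else 0) \<partial>idle_law) = 1 - exp (- l * S)"
    using integral_exponential_density_truncated_affine[OF l_pos S, of 0 1] by (simp cong: if_cong)
  finally show ?thesis .
qed

definition barrier_integrand :: "real \<Rightarrow> real \<Rightarrow> real \<Rightarrow> real \<times> real \<Rightarrow> real" where
  "barrier_integrand c \<beta> S w =
     (if fst w \<le> S then c * (S - fst w) + \<beta> + max (r (snd w) - c * snd w) 0 else 0)"

lemma barrier_integrand_split:
  "barrier_integrand c \<beta> S = (\<lambda>w. (if fst w \<le> S then c * (S - fst w) + \<beta> else 0)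
      + (if fst w \<le> S then 1 else 0) * max (r (snd w) - c * snd w) 0)"
  by (auto simp: barrier_integrand_def fun_eq_iff)

lemma
  assumes c: "0 \<le> c" and S: "0 \<le> S"
  shows integrable_barrier_integrand: "integrable \<nu> (barrier_integrand c \<beta> S)"
    and integral_barrier_integrand: "(\<integral>w. barrier_integrand c \<beta> S w \<partial>\<nu>)
          = c * (S - (1 - exp (- l * S)) / l) + \<beta> * (1 - exp (- l * S)) + (1 - exp (- l * S)) * excess_reward c"
proof -
  note integrable = integrable_truncated_affine[OF c S, of \<beta>] integrable_truncated_excess[OF c, of S]
  show "integrable \<nu> (barrier_integrand c \<beta> S)"
    unfolding barrier_integrand_split using integrable by simp
  have "(\<integral>w. (if fst w \<le> S then c * (S - fst w) + \<beta> else 0) \<partial>\<nu>)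
      = c * (S - (1 - exp (- l * S)) / l) + \<beta> * (1 - exp (- l * S))"
    using integral_task_fst[of "\<lambda>\<tau>. if \<tau> \<le> S then c * (S - \<tau>) + \<beta> else 0"]
      integral_exponential_density_truncated_affine[OF l_pos S] by simp
  then show "(\<integral>w. barrier_integrand c \<beta> S w \<partial>\<nu>)
      = c * (S - (1 - exp (- l * S)) / l) + \<beta> * (1 - exp (- l * S)) + (1 - exp (- l * S)) * excess_reward c"
    unfolding barrier_integrand_split using integrable integral_truncated_excess[OF c S] by simp
qed

definition upper_barrier :: "real \<Rightarrow> real \<Rightarrow> real" where
  "upper_barrier c s = (if s < T then c * (T - s + C) else 0)"

definition lower_barrier :: "real \<Rightarrow> real \<Rightarrow> real" where
  "lower_barrier c s = c * max (T - s) 0"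

lemma upper_barrier_nonneg: "0 \<le> c \<Longrightarrow> 0 \<le> upper_barrier c s"
  using C_nonneg by (simp add: upper_barrier_def)

lemma tail_bounded_upper_barrier: "0 \<le> c \<Longrightarrow> tail_bounded (upper_barrier c)"
  unfolding tail_bounded_def
proof (intro conjI allI)
  assume c: "0 \<le> c"
  fix a
  have "\<forall>s\<ge>a. \<bar>upper_barrier c s\<bar> \<le> c * (max (T - a) 0 + C)"
    using c C_nonneg by (auto simp: upper_barrier_def intro!: mult_left_mono)
  then show "\<exists>B. \<forall>s\<ge>a. \<bar>upper_barrier c s\<bar> \<le> B" by blast
qed (simp add: upper_barrier_def[abs_def])

lemma tail_bounded_lower_barrier: "0 \<le> c \<Longrightarrow> tail_bounded (lower_barrier c)"
  unfolding tail_bounded_def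
proof (intro conjI allI)
  assume c: "0 \<le> c"
  fix a
  have "\<forall>s\<ge>a. \<bar>lower_barrier c s\<bar> \<le> c * max (T - a) 0"
    using c by (auto simp: lower_barrier_def abs_mult intro!: mult_left_mono)
  then show "\<exists>B. \<forall>s\<ge>a. \<bar>lower_barrier c s\<bar> \<le> B" by blast
qed (simp add: lower_barrier_def[abs_def])

lemma bellman_upper_barrier_le:
  assumes c: "0 \<le> c" and super: "l * excess_reward c \<le> c"
  shows "bellman (upper_barrier c) t \<le> upper_barrier c t"
proof (cases "T \<le> t")
  case True then show ?thesis by (simp add: bellman_after_horizon upper_barrier_def)
next
  case False
  define S where "S = T - t"
  define P where "P = 1 - exp (- l * S)"
  have S: "0 < S" using False by (simp add: S_def)
  have P: "0 \<le> P" "P \<le> 1" using l_pos S by (auto simp: P_def)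
  have "bellman (upper_barrier c) t \<le> (\<integral>w. barrier_integrand c (c * C) S w \<partial>\<nu>)"
    unfolding bellman_def
  proof (rule integral_mono_AE)
    show "integrable \<nu> (bellman_integrand (upper_barrier c) t)"
      by (rule integrable_bellman_integrand[OF tail_bounded_upper_barrier[OF c]])
    show "integrable \<nu> (barrier_integrand c (c * C) S)"
      using c S by (intro integrable_barrier_integrand) auto
    show "AE w in \<nu>. bellman_integrand (upper_barrier c) t w \<le> barrier_integrand c (c * C) S w"
      using AE_regular_task
    proof eventually_elim
      case (elim w)
      then have w: "0 < fst w" "0 \<le> snd w" "snd w \<le> C" by (auto simp: regular_task_def)
      have "fst w \<le> S \<Longrightarrow> upper_barrier c (t + fst w + snd w) \<le> c * (S - fst w + C) - c * snd w"
        using c w mult_nonneg_nonneg[of c "S - fst w + C - snd w"]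
        by (auto simp: upper_barrier_def S_def algebra_simps)
      moreover have "fst w \<le> S \<Longrightarrow> upper_barrier c (t + fst w) \<le> c * (S - fst w + C)"
        using c C_nonneg by (auto simp: upper_barrier_def S_def algebra_simps)
      ultimately show ?case
        by (auto simp: bellman_integrand_def barrier_integrand_def S_def max_def algebra_simps)
    qed
  qed
  also have "\<dots> = c * (S - P / l) + c * C * P + P * excess_reward c"
    unfolding P_def using integral_barrier_integrand[OF c, of S "c * C"] S by simp
  also have "\<dots> \<le> c * (S - P / l) + c * C * P + P * (c / l)"
    using super l_pos P by (intro add_left_mono mult_left_mono) (auto simp: field_simps)
  also have "\<dots> = c * S + c * C * P"
    using l_pos by (simp add: field_simps)
  also have "\<dots> \<le> c * S + c * C"
    using P c C_nonneg by (intro add_left_mono) (auto intro: mult_left_le)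
  also have "\<dots> = upper_barrier c t" using False by (simp add: upper_barrier_def S_def algebra_simps)
  finally show ?thesis .
qed

lemma lower_barrier_le_bellman:
  assumes c: "0 \<le> c" and sub: "c \<le> l * excess_reward c"
  shows "lower_barrier c t \<le> bellman (lower_barrier c) t"
proof (cases "T \<le> t")
  case True then show ?thesis by (simp add: bellman_after_horizon lower_barrier_def)
next
  case False
  define S where "S = T - t"
  define P where "P = 1 - exp (- l * S)"
  have S: "0 < S" using False by (simp add: S_def)
  have P: "0 \<le> P" using l_pos S by (auto simp: P_def)
  have "lower_barrier c t = c * (S - P / l) + P * (c / l)"
    using False l_pos by (simp add: lower_barrier_def S_def field_simps)
  also have "\<dots> \<le> c * (S - P / l) + 0 * P + P * excess_reward c"
    using sub l_pos P by (simp add: mult_left_mono field_simps)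
  also have "\<dots> = (\<integral>w. barrier_integrand c 0 S w \<partial>\<nu>)"
    unfolding P_def using integral_barrier_integrand[OF c, of S 0] S by simp
  also have "\<dots> \<le> bellman (lower_barrier c) t"
    unfolding bellman_def
  proof (rule integral_mono_AE)
    show "integrable \<nu> (bellman_integrand (lower_barrier c) t)"
      by (rule integrable_bellman_integrand[OF tail_bounded_lower_barrier[OF c]])
    show "integrable \<nu> (barrier_integrand c 0 S)"
      using c S by (intro integrable_barrier_integrand) auto
    show "AE w in \<nu>. barrier_integrand c 0 S w \<le> bellman_integrand (lower_barrier c) t w"
      using AE_regular_task
    proof eventually_elim
      case (elim w)
      then have w: "0 < fst w" "0 \<le> snd w" by (auto simp: regular_task_def)
      have "c * (S - fst w) - c * snd w \<le> lower_barrier c (t + fst w + snd w)"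
        using mult_left_mono[of "T - t - fst w - snd w" "max (T - (t + fst w + snd w)) 0" c] c
        by (simp add: lower_barrier_def S_def algebra_simps)
      moreover have "fst w \<le> S \<Longrightarrow> lower_barrier c (t + fst w) = c * (S - fst w)"
        by (auto simp: lower_barrier_def S_def)
      ultimately show ?case
        by (auto simp: bellman_integrand_def barrier_integrand_def S_def max_def algebra_simps)
    qed
  qed
  finally show ?thesis .
qed

section \<open>The fixed point of the Bellman operator\<close>

definition bellman_iter :: "nat \<Rightarrow> real \<Rightarrow> real" where
  "bellman_iter n = (bellman ^^ n) (\<lambda>_. 0)"

lemma bellman_iter_Suc: "bellman_iter (Suc n) = bellman (bellman_iter n)"
  by (simp add: bellman_iter_def)

lemma bellman_upper_barrier_lK_le: "bellman (upper_barrier (l * K)) t \<le> upper_barrier (l * K) t"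
  using l_pos K_nonneg excess_reward_le[of "l * K"]
  by (intro bellman_upper_barrier_le) (auto intro: mult_left_mono)

lemma bellman_iter_bounds:
  "tail_bounded (bellman_iter n) \<and> (\<forall>s. 0 \<le> bellman_iter n s \<and> bellman_iter n s \<le> upper_barrier (l * K) s)"
proof (induction n)
  case 0
  have "tail_bounded (\<lambda>_. 0)" by (auto simp: tail_bounded_def)
  then show ?case using l_pos K_nonneg by (simp add: bellman_iter_def upper_barrier_nonneg)
next
  case (Suc n)
  then have f: "tail_bounded (bellman_iter n)" and "\<And>s. 0 \<le> bellman_iter n s"
    and "\<And>s. bellman_iter n s \<le> upper_barrier (l * K) s" by auto
  moreover have "bellman (bellman_iter n) s \<le> upper_barrier (l * K) s" for s
    using bellman_mono[OF f tail_bounded_upper_barrier, of "l * K" s] l_pos K_nonneg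
      bellman_upper_barrier_lK_le[of s] calculation by auto
  ultimately show ?case using tail_bounded_bellman bellman_nonneg by (auto simp: bellman_iter_Suc)
qed

lemma bellman_iter_mono: "bellman_iter n s \<le> bellman_iter (Suc n) s"
proof (induction n arbitrary: s)
  case 0 then show ?case using bellman_iter_bounds[of 1] by (simp add: bellman_iter_def)
next
  case (Suc n)
  show ?case
    unfolding bellman_iter_Suc[of "Suc n"] bellman_iter_Suc[of n]
    using bellman_mono[of "bellman_iter n" "bellman_iter (Suc n)" s]
      bellman_iter_bounds[of n] bellman_iter_bounds[of "Suc n"] Suc
    by (simp add: bellman_iter_Suc)
qed

definition bellman_fix :: "real \<Rightarrow> real" where
  "bellman_fix s = (SUP n. bellman_iter n s)"

lemma bellman_iter_tendsto: "(\<lambda>n. bellman_iter n s) \<longlonglongrightarrow> bellman_fix s"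
  unfolding bellman_fix_def
proof (rule LIMSEQ_incseq_SUP)
  show "bdd_above (range (\<lambda>n. bellman_iter n s))"
    using bellman_iter_bounds by (auto intro!: bdd_aboveI[where M="upper_barrier (l * K) s"])
  show "incseq (\<lambda>n. bellman_iter n s)" using bellman_iter_mono by (simp add: incseq_SucI)
qed

lemma bellman_fix_nonneg: "0 \<le> bellman_fix s"
  using bellman_iter_bounds by (auto intro!: LIMSEQ_le_const[OF bellman_iter_tendsto])

lemma bellman_fix_le_upper_barrier_lK: "bellman_fix s \<le> upper_barrier (l * K) s"
  using bellman_iter_bounds by (auto intro!: LIMSEQ_le_const2[OF bellman_iter_tendsto])

lemma measurable_bellman_fix[measurable]: "bellman_fix \<in> borel_measurable borel"
  by (rule borel_measurable_LIMSEQ_real[OF bellman_iter_tendsto])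
     (use bellman_iter_bounds in \<open>auto intro: tail_bounded_measurable\<close>)

lemma tail_bounded_bellman_fix: "tail_bounded bellman_fix"
  using l_pos K_nonneg
  by (intro tail_bounded_between[OF tail_bounded_upper_barrier bellman_fix_nonneg
        bellman_fix_le_upper_barrier_lK measurable_bellman_fix]) simp

lemma bellman_fix_eq: "bellman bellman_fix t = bellman_fix t"
proof -
  obtain B where B: "\<forall>s\<ge>t. \<bar>upper_barrier (l * K) s\<bar> \<le> B"
    using tail_boundedD[OF tail_bounded_upper_barrier] l_pos K_nonneg by fastforce
  have bounded: "\<forall>s\<ge>t. \<bar>bellman_iter n s\<bar> \<le> B" for n
    using B bellman_iter_bounds[of n] by (metis abs_of_nonneg order_trans abs_ge_self)
  have "(\<lambda>n. bellman (bellman_iter n) t) \<longlonglongrightarrow> bellman bellman_fix t"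
    unfolding bellman_def
  proof (rule integral_dominated_convergence[where w="\<lambda>_. K + B"])
    show "bellman_integrand bellman_fix t \<in> borel_measurable \<nu>"
      by (rule measurable_bellman_integrand) simp
    show "bellman_integrand (bellman_iter n) t \<in> borel_measurable \<nu>" for n
      using bellman_iter_bounds by (intro measurable_bellman_integrand tail_bounded_measurable) blast
    show "integrable \<nu> (\<lambda>_. K + B)"
      using prob_space_task_measure by (simp add: prob_space_def finite_measure.integrable_const)
    show "AE w in \<nu>. (\<lambda>n. bellman_integrand (bellman_iter n) t w) \<longlonglongrightarrow> bellman_integrand bellman_fix t w"
      unfolding bellman_integrand_def by (intro AE_I2) (auto intro!: tendsto_intros bellman_iter_tendsto)
    show "AE w in \<nu>. norm (bellman_integrand (bellman_iter n) t w) \<le> K + B" for n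
      using AE_regular_task by eventually_elim (use abs_bellman_integrand_le[OF bounded] in auto)
  qed
  moreover have "(\<lambda>n. bellman (bellman_iter n) t) \<longlonglongrightarrow> bellman_fix t"
    using bellman_iter_tendsto[of t] unfolding bellman_iter_Suc[symmetric] by (rule LIMSEQ_Suc)
  ultimately show ?thesis by (rule LIMSEQ_unique)
qed

lemma bellman_fix_after_horizon: "T \<le> t \<Longrightarrow> bellman_fix t = 0"
  using bellman_fix_eq[of t] bellman_after_horizon[of t bellman_fix] by simp

lemma lower_barrier_le_bellman_fix:
  assumes c: "0 \<le> c" "c \<le> l * excess_reward c" shows "lower_barrier c s \<le> bellman_fix s"
proof -
  have "\<forall>x\<in>{s..}. lower_barrier c x - bellman_fix x \<le> 0"
  proof (rule contraction_bound_nonpos[OF proposal_prob_nonneg proposal_prob_less_1])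
    show "\<forall>x\<in>{s..}. lower_barrier c x - bellman_fix x \<le> c * max (T - s) 0"
    proof
      fix x assume "x \<in> {s..}"
      then have "max (T - x) 0 \<le> max (T - s) 0" by auto
      from mult_left_mono[OF this c(1)] bellman_fix_nonneg[of x]
      show "lower_barrier c x - bellman_fix x \<le> c * max (T - s) 0" by (simp add: lower_barrier_def)
    qed
    fix \<delta> :: real assume \<delta>: "0 \<le> \<delta>" "\<forall>x\<in>{s..}. lower_barrier c x - bellman_fix x \<le> \<delta>"
    show "\<forall>x\<in>{s..}. lower_barrier c x - bellman_fix x \<le> proposal_prob s * \<delta>"
    proof
      fix x assume x: "x \<in> {s..}"
      have "lower_barrier c x - bellman_fix x \<le> bellman (lower_barrier c) x - bellman bellman_fix x"
        using lower_barrier_le_bellman[OF c, of x] bellman_fix_eq[of x] by simp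
      also have "\<dots> \<le> \<delta> * proposal_prob s"
        using \<delta> x by (intro bellman_diff_le[OF tail_bounded_lower_barrier[OF c(1)] tail_bounded_bellman_fix]) auto
      finally show "lower_barrier c x - bellman_fix x \<le> proposal_prob s * \<delta>" by (simp add: mult.commute)
    qed
  qed
  then show ?thesis by auto
qed

lemma bellman_fix_le_upper_barrier:
  assumes c: "0 \<le> c" "l * excess_reward c \<le> c" shows "bellman_fix s \<le> upper_barrier c s"
proof -
  obtain B where B: "\<forall>x\<ge>s. \<bar>bellman_fix x\<bar> \<le> B" using tail_boundedD[OF tail_bounded_bellman_fix] by blast
  have "\<forall>x\<in>{s..}. bellman_fix x - upper_barrier c x \<le> 0"
  proof (rule contraction_bound_nonpos[OF proposal_prob_nonneg proposal_prob_less_1])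
    show "\<forall>x\<in>{s..}. bellman_fix x - upper_barrier c x \<le> B"
    proof
      fix x assume "x \<in> {s..}"
      then have "bellman_fix x \<le> B" using B by (auto simp: abs_le_iff)
      then show "bellman_fix x - upper_barrier c x \<le> B" using upper_barrier_nonneg[OF c(1), of x] by linarith
    qed
    fix \<delta> :: real assume \<delta>: "0 \<le> \<delta>" "\<forall>x\<in>{s..}. bellman_fix x - upper_barrier c x \<le> \<delta>"
    show "\<forall>x\<in>{s..}. bellman_fix x - upper_barrier c x \<le> proposal_prob s * \<delta>"
    proof
      fix x assume x: "x \<in> {s..}"
      have "bellman_fix x - upper_barrier c x \<le> bellman bellman_fix x - bellman (upper_barrier c) x"
        using bellman_upper_barrier_le[OF c, of x] bellman_fix_eq[of x] by simp
      also have "\<dots> \<le> \<delta> * proposal_prob s"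
        using \<delta> x by (intro bellman_diff_le[OF tail_bounded_bellman_fix tail_bounded_upper_barrier[OF c(1)]]) auto
      finally show "bellman_fix x - upper_barrier c x \<le> proposal_prob s * \<delta>" by (simp add: mult.commute)
    qed
  qed
  then show ?thesis by auto
qed

section \<open>The fixed point is the value function\<close>

lemma first_reward_le_bellman_integrand:
  "t + fst w \<le> T \<Longrightarrow> first_reward t d w + f (next_idle_time t d w) \<le> bellman_integrand f t w"
  by (auto simp: first_reward_def next_idle_time_def bellman_integrand_def)

lemma expected_reward_minus_bellman_fix:
  assumes d: "admissible d"
  shows "integrable \<nu> (\<lambda>w. conditional_reward x d w - bellman_integrand bellman_fix x w)"
    and "expected_reward x d - bellman_fix x
           = (\<integral>w. conditional_reward x d w - bellman_integrand bellman_fix x w \<partial>\<nu>)"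
    and "AE w in \<nu>. x \<le> next_idle_time x d w \<and>
           conditional_reward x d w - bellman_integrand bellman_fix x w =
           (if x + fst w \<le> T
            then first_reward x d w + bellman_fix (next_idle_time x d w) - bellman_integrand bellman_fix x w
               + (expected_reward (next_idle_time x d w) (shift_policy d w) - bellman_fix (next_idle_time x d w))
            else 0)"
proof -
  show "integrable \<nu> (\<lambda>w. conditional_reward x d w - bellman_integrand bellman_fix x w)"
    using expected_reward_first_step(2)[OF d] integrable_bellman_integrand[OF tail_bounded_bellman_fix] by simp
  then show "expected_reward x d - bellman_fix x
           = (\<integral>w. conditional_reward x d w - bellman_integrand bellman_fix x w \<partial>\<nu>)"
    using expected_reward_first_step(1,2)[OF d] integrable_bellman_integrand[OF tail_bounded_bellman_fix]
      bellman_fix_eq[of x] by (simp add: bellman_def)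
  show "AE w in \<nu>. x \<le> next_idle_time x d w \<and>
           conditional_reward x d w - bellman_integrand bellman_fix x w =
           (if x + fst w \<le> T
            then first_reward x d w + bellman_fix (next_idle_time x d w) - bellman_integrand bellman_fix x w
               + (expected_reward (next_idle_time x d w) (shift_policy d w) - bellman_fix (next_idle_time x d w))
            else 0)"
    using AE_regular_task expected_reward_first_step(3)[OF d, of x]
  proof eventually_elim
    case (elim w)
    then have w: "0 < fst w" "0 \<le> snd w" by (auto simp: regular_task_def)
    then have "x + fst w \<le> next_idle_time x d w" by (simp add: next_idle_time_def)
    moreover have "\<not> x + fst w \<le> T \<Longrightarrow> expected_reward (next_idle_time x d w) (shift_policy d w) = 0"
      using calculation by (intro expected_reward_after_horizon) simp
    ultimately show ?case
      using elim(2) w by (auto simp: first_reward_def bellman_integrand_def)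
  qed
qed

lemma expected_reward_le_bellman_fix:
  assumes "admissible d" shows "expected_reward s d \<le> bellman_fix s"
proof -
  let ?A = "{(x, d). s \<le> x \<and> admissible d}"
  have "\<forall>z\<in>?A. expected_reward (fst z) (snd z) - bellman_fix (fst z) \<le> 0"
  proof (rule contraction_bound_nonpos[OF proposal_prob_nonneg proposal_prob_less_1])
    show "\<forall>z\<in>?A. expected_reward (fst z) (snd z) - bellman_fix (fst z)
                   \<le> K * (\<integral>\<omega>. enn2real (proposal_count (T - s) \<omega>) \<partial>\<Omega>)"
    proof (intro ballI)
      fix z assume "z \<in> ?A"
      then obtain x d where z: "z = (x, d)" "s \<le> x" "admissible d" by auto
      then show "expected_reward (fst z) (snd z) - bellman_fix (fst z)
                   \<le> K * (\<integral>\<omega>. enn2real (proposal_count (T - s) \<omega>) \<partial>\<Omega>)"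
        using abs_expected_reward_le[OF z(3,2)] bellman_fix_nonneg[of x] by (simp add: abs_le_iff)
    qed
    fix \<delta> :: real
    assume \<delta>: "0 \<le> \<delta>" and hyp: "\<forall>z\<in>?A. expected_reward (fst z) (snd z) - bellman_fix (fst z) \<le> \<delta>"
    show "\<forall>z\<in>?A. expected_reward (fst z) (snd z) - bellman_fix (fst z) \<le> proposal_prob s * \<delta>"
    proof (clarsimp)
      fix x d assume x: "s \<le> x" and d: "admissible d"
      have "(\<integral>w. conditional_reward x d w - bellman_integrand bellman_fix x w \<partial>\<nu>) \<le> \<delta> * proposal_prob s"
      proof (rule integral_le_proposal_prob[OF expected_reward_minus_bellman_fix(1)[OF d] \<delta>])
        show "AE w in \<nu>. conditional_reward x d w - bellman_integrand bellman_fix x w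
                \<le> \<delta> * (if s + fst w \<le> T then 1 else 0)"
          using expected_reward_minus_bellman_fix(3)[OF d, of x]
        proof eventually_elim
          case (elim w)
          have "expected_reward (next_idle_time x d w) (shift_policy d w) - bellman_fix (next_idle_time x d w) \<le> \<delta>"
            using hyp[rule_format, of "(next_idle_time x d w, shift_policy d w)"] elim x
              admissible_shift_policy[OF d] by simp
          then show ?case
            using elim x \<delta> first_reward_le_bellman_integrand[of x w d bellman_fix] by auto
        qed
      qed
      then show "expected_reward x d - bellman_fix x \<le> proposal_prob s * \<delta>"
        using expected_reward_minus_bellman_fix(2)[OF d] by (simp add: mult.commute)
    qed
  qed
  then show ?thesis using assms by auto
qed

definition optimal_rule :: "real \<Rightarrow> real \<Rightarrow> bool" where
  "optimal_rule s x \<longleftrightarrow> bellman_fix s \<le> r x + bellman_fix (s + x)"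

lemma admissible_optimal_policy: "admissible (feedback_policy optimal_rule s)"
  by (rule admissible_feedback_policy) (unfold optimal_rule_def, measurable)

lemma expected_reward_optimal_policy: "expected_reward s (feedback_policy optimal_rule s) = bellman_fix s"
proof -
  obtain B where B: "\<forall>x\<ge>s. \<bar>bellman_fix x\<bar> \<le> B" using tail_boundedD[OF tail_bounded_bellman_fix] by blast
  let ?gap = "\<lambda>x. \<bar>expected_reward x (feedback_policy optimal_rule x) - bellman_fix x\<bar>"
  have "\<forall>x\<in>{s..}. ?gap x \<le> 0"
  proof (rule contraction_bound_nonpos[OF proposal_prob_nonneg proposal_prob_less_1])
    show "\<forall>x\<in>{s..}. ?gap x \<le> K * (\<integral>\<omega>. enn2real (proposal_count (T - s) \<omega>) \<partial>\<Omega>) + B"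
    proof
      fix x assume "x \<in> {s..}"
      then show "?gap x \<le> K * (\<integral>\<omega>. enn2real (proposal_count (T - s) \<omega>) \<partial>\<Omega>) + B"
        using abs_expected_reward_le[OF admissible_optimal_policy[of x], of s x] B[rule_format, of x]
        by (simp add: abs_le_iff)
    qed
    fix \<delta> :: real assume \<delta>: "0 \<le> \<delta>" and hyp: "\<forall>x\<in>{s..}. ?gap x \<le> \<delta>"
    show "\<forall>x\<in>{s..}. ?gap x \<le> proposal_prob s * \<delta>"
    proof
      fix x assume x: "x \<in> {s..}"
      let ?d = "feedback_policy optimal_rule x"
      note gap = expected_reward_minus_bellman_fix[OF admissible_optimal_policy, of x x]
      have "?gap x \<le> (\<integral>w. \<bar>conditional_reward x ?d w - bellman_integrand bellman_fix x w\<bar> \<partial>\<nu>)"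
        unfolding gap(2) by (rule integral_abs_bound)
      also have "\<dots> \<le> \<delta> * proposal_prob s"
      proof (rule integral_le_proposal_prob[OF integrable_abs[OF gap(1)] \<delta>])
        show "AE w in \<nu>. \<bar>conditional_reward x ?d w - bellman_integrand bellman_fix x w\<bar>
                \<le> \<delta> * (if s + fst w \<le> T then 1 else 0)"
          using gap(3)
        proof eventually_elim
          case (elim w)
          have "x + fst w \<le> T \<Longrightarrow> first_reward x ?d w + bellman_fix (next_idle_time x ?d w)
                  = bellman_integrand bellman_fix x w"
            by (auto simp: first_reward_def next_idle_time_def bellman_integrand_def
                first_decision_feedback_policy optimal_rule_def)
          moreover have "?gap (next_idle_time x ?d w) \<le> \<delta>"
            using hyp elim x by simp
          ultimately show ?case
            using elim x \<delta> by (auto simp: shift_feedback_policy next_idle_time_feedback_policy)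
        qed
      qed
      finally show "?gap x \<le> proposal_prob s * \<delta>" by (simp add: mult.commute)
    qed
  qed
  then show ?thesis by auto
qed

lemma value_fn_eq_bellman_fix: "value_fn l M X r T t = bellman_fix t"
proof (cases "T \<le> t")
  case True then show ?thesis by (simp add: value_fn_def bellman_fix_after_horizon)
next
  case False
  have "(SUP d\<in>{d. admissible d}. expected_reward t d) = bellman_fix t"
  proof (rule antisym)
    show "(SUP d\<in>{d. admissible d}. expected_reward t d) \<le> bellman_fix t"
      using admissible_optimal_policy by (intro cSUP_least) (auto intro: expected_reward_le_bellman_fix)
    have "expected_reward t (feedback_policy optimal_rule t) \<le> (SUP d\<in>{d. admissible d}. expected_reward t d)"
      using admissible_optimal_policy expected_reward_le_bellman_fix
      by (intro cSUP_upper bdd_aboveI2[where M="bellman_fix t"]) auto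
    then show "bellman_fix t \<le> (SUP d\<in>{d. admissible d}. expected_reward t d)"
      by (simp add: expected_reward_optimal_policy)
  qed
  then show ?thesis using False by (simp add: value_fn_def expected_reward_def)
qed

section \<open>The dynamic programming equation\<close>

definition proposal_value :: "real \<Rightarrow> real" where
  "proposal_value s = (\<integral>\<omega>. max (r (X \<omega>) + bellman_fix (s + X \<omega>)) (bellman_fix s) \<partial>M)"

lemma measurable_proposal_value[measurable]: "proposal_value \<in> borel_measurable borel"
  unfolding proposal_value_def[abs_def]
  by (rule borel_measurable_lebesgue_integral) measurable

lemma abs_proposal_value_integrand_le:
  assumes "\<forall>x\<ge>s. \<bar>bellman_fix x\<bar> \<le> B" "\<omega> \<in> space M"
  shows "\<bar>max (r (X \<omega>) + bellman_fix (s + X \<omega>)) (bellman_fix s)\<bar> \<le> K + B"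
proof -
  have x: "X \<omega> \<in> {0..C}" using X_range assms(2) by auto
  then have "\<bar>r (X \<omega>)\<bar> \<le> K" by (rule r_bounded)
  moreover have "\<bar>bellman_fix (s + X \<omega>)\<bar> \<le> B" "\<bar>bellman_fix s\<bar> \<le> B" using assms(1) x by auto
  ultimately show ?thesis using K_nonneg by (auto simp: abs_le_iff)
qed

lemma integrable_proposal_value_integrand:
  assumes "\<forall>x\<ge>s. \<bar>bellman_fix x\<bar> \<le> B"
  shows "integrable M (\<lambda>\<omega>. max (r (X \<omega>) + bellman_fix (s + X \<omega>)) (bellman_fix s))"
  by (rule integrable_bounded[OF _ abs_proposal_value_integrand_le[OF assms]]) measurable

lemma abs_proposal_value_le:
  assumes "\<forall>x\<ge>s. \<bar>bellman_fix x\<bar> \<le> B" shows "\<bar>proposal_value s\<bar> \<le> K + B"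
proof -
  have "\<bar>proposal_value s\<bar> \<le> (\<integral>\<omega>. \<bar>max (r (X \<omega>) + bellman_fix (s + X \<omega>)) (bellman_fix s)\<bar> \<partial>M)"
    unfolding proposal_value_def by (rule integral_abs_bound)
  also have "\<dots> \<le> K + B"
    using integrable_proposal_value_integrand[OF assms] abs_proposal_value_integrand_le[OF assms]
    by (intro integral_le_const AE_I2) auto
  finally show ?thesis .
qed

lemma bellman_fix_eq_integral_idle:
  "bellman_fix t = (\<integral>\<tau>. (if t + \<tau> \<le> T then proposal_value (t + \<tau>) else 0) \<partial>idle_law)"
proof -
  have int: "integrable (idle_law \<Otimes>\<^sub>M duration_law) (bellman_integrand bellman_fix t)"
    using integrable_bellman_integrand[OF tail_bounded_bellman_fix, of t] by (simp add: task_measure_eq)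
  have "bellman_fix t = (\<integral>w. bellman_integrand bellman_fix t w \<partial>(idle_law \<Otimes>\<^sub>M duration_law))"
    using bellman_fix_eq[of t] by (simp add: bellman_def task_measure_eq)
  also have "\<dots> = (\<integral>\<tau>. (\<integral>x. bellman_integrand bellman_fix t (\<tau>, x) \<partial>duration_law) \<partial>idle_law)"
    using tasks.integral_fst'[OF int] by simp
  also have "\<dots> = (\<integral>\<tau>. (if t + \<tau> \<le> T then proposal_value (t + \<tau>) else 0) \<partial>idle_law)"
  proof (rule Bochner_Integration.integral_cong[OF refl])
    fix \<tau>
    have "(\<lambda>x. bellman_integrand bellman_fix t (\<tau>, x)) \<in> borel_measurable borel"
      unfolding bellman_integrand_def fst_conv snd_conv by measurable
    then show "(\<integral>x. bellman_integrand bellman_fix t (\<tau>, x) \<partial>duration_law)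
        = (if t + \<tau> \<le> T then proposal_value (t + \<tau>) else 0)"
      by (subst integral_distr[OF X_measurable])
         (auto simp: bellman_integrand_def proposal_value_def add.assoc)
  qed
  finally show ?thesis .
qed

definition discounted_proposal_value :: "real \<Rightarrow> real" where
  "discounted_proposal_value s = l * exp (- l * s) * proposal_value s"

lemma measurable_discounted_proposal_value[measurable]:
  "discounted_proposal_value \<in> borel_measurable borel"
  unfolding discounted_proposal_value_def[abs_def] by measurable

lemma set_integrable_discounted_proposal_value:
  "set_integrable lborel {a..b} discounted_proposal_value"
proof -
  obtain B where B: "\<forall>x\<ge>a. \<bar>bellman_fix x\<bar> \<le> B" using tail_boundedD[OF tail_bounded_bellman_fix] by blast
  have bound: "\<bar>discounted_proposal_value s\<bar> \<le> l * exp (- l * a) * (K + B)" if "a \<le> s" for s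
  proof -
    have "\<bar>proposal_value s\<bar> \<le> K + B" using B that by (intro abs_proposal_value_le) auto
    moreover have "exp (- l * s) \<le> exp (- l * a)" using l_pos that by auto
    ultimately show ?thesis unfolding discounted_proposal_value_def abs_mult using l_pos
      by (intro mult_mono) auto
  qed
  show ?thesis unfolding set_integrable_def
  proof (rule Bochner_Integration.integrable_bound)
    show "integrable lborel (\<lambda>x. l * exp (- l * a) * (K + B) * indicator {a..b} x :: real)"
      by (intro integrable_mult_right integrable_real_indicator) (auto simp: emeasure_lborel_Icc_eq)
    show "AE x in lborel. norm (indicator {a..b} x *\<^sub>R discounted_proposal_value x)
            \<le> norm (l * exp (- l * a) * (K + B) * indicator {a..b} x :: real)"
      using bound by (intro AE_I2) (auto simp: indicator_def intro: order.trans[OF _ abs_ge_self])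
  qed measurable
qed

lemma discounted_proposal_value_integrable_on: "discounted_proposal_value integrable_on {a..b}"
  using set_borel_integral_eq_integral(1)[OF set_integrable_discounted_proposal_value] .

lemma bellman_fix_eq_integral:
  assumes "t \<le> T" shows "bellman_fix t = exp (l * t) * integral {t..T} discounted_proposal_value"
proof -
  define F where "F \<tau> = exponential_density l \<tau> * (if t + \<tau> \<le> T then proposal_value (t + \<tau>) else 0)" for \<tau>
  have "bellman_fix t = (\<integral>\<tau>. F \<tau> \<partial>lborel)"
    unfolding bellman_fix_eq_integral_idle F_def by (subst integral_density) (auto simp: exponential_density_nonneg l_pos)
  also have "\<dots> = (\<integral>s. F (-t + 1 * s) \<partial>lborel)"
    by (subst lborel_integral_real_affine[where c=1 and t="-t"]) auto
  also have "\<dots> = (\<integral>s. exp (l * t) * (indicator {t..T} s *\<^sub>R discounted_proposal_value s) \<partial>lborel)"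
  proof (rule Bochner_Integration.integral_cong[OF refl])
    fix s
    have "exp (l * t) * (l * exp (- l * s)) = l * exp (- ((s - t) * l))"
      by (simp add: exp_add[symmetric] algebra_simps)
    then show "F (-t + 1 * s) = exp (l * t) * (indicator {t..T} s *\<^sub>R discounted_proposal_value s)"
      by (auto simp: F_def exponential_density_def indicator_def discounted_proposal_value_def algebra_simps)
  qed
  also have "\<dots> = exp (l * t) * (LINT s:{t..T}|lborel. discounted_proposal_value s)"
    by (simp add: set_lebesgue_integral_def)
  finally show ?thesis
    using set_borel_integral_eq_integral(2)[OF set_integrable_discounted_proposal_value] by simp
qed

lemma isCont_bellman_fix: "isCont bellman_fix t"
proof -
  define a where "a = min (t - 1) T"
  have "continuous_on {a..T} (\<lambda>x. exp (l * x) * integral {x..T} discounted_proposal_value)"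
    by (intro continuous_intros indefinite_integral_continuous_1' discounted_proposal_value_integrable_on)
  then have "continuous_on {a..T} bellman_fix"
    by (rule continuous_on_cong[THEN iffD1, rotated 2]) (auto simp: bellman_fix_eq_integral)
  moreover have "continuous_on {T..} bellman_fix"
    by (rule continuous_on_cong[THEN iffD1, of _ _ "\<lambda>_. 0", rotated 2]) (auto simp: bellman_fix_after_horizon)
  ultimately have "continuous_on ({a..T} \<union> {T..}) bellman_fix"
    by (intro continuous_on_closed_Un) auto
  moreover have "{a..T} \<union> {T..} = {a..}" by (auto simp: a_def)
  moreover have "t \<in> interior {a..}" by (auto simp: a_def)
  ultimately show ?thesis by (auto intro: continuous_on_interior)
qed

lemma isCont_proposal_value: "isCont proposal_value s"
  unfolding continuous_at_eps_delta
proof (intro allI impI)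
  fix e :: real assume e: "0 < e"
  let ?S = "{s - 1 .. s + 1 + C}"
  have "uniformly_continuous_on ?S bellman_fix"
    by (intro compact_uniformly_continuous continuous_at_imp_continuous_on ballI isCont_bellman_fix) auto
  then obtain d where d: "0 < d"
    and close: "\<And>x x'. x \<in> ?S \<Longrightarrow> x' \<in> ?S \<Longrightarrow> dist x' x < d \<Longrightarrow> dist (bellman_fix x') (bellman_fix x) < e / 2"
    unfolding uniformly_continuous_on_def using e by (meson half_gt_zero)
  obtain B where B: "\<forall>x\<ge>s - 1. \<bar>bellman_fix x\<bar> \<le> B" using tail_boundedD[OF tail_bounded_bellman_fix] by blast
  show "\<exists>d>0. \<forall>s'. dist s' s < d \<longrightarrow> dist (proposal_value s') (proposal_value s) < e"
  proof (intro exI[of _ "min d 1"] conjI allI impI)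
    show "0 < min d 1" using d by auto
    fix s' assume s': "dist s' s < min d 1"
    let ?f = "\<lambda>s \<omega>. max (r (X \<omega>) + bellman_fix (s + X \<omega>)) (bellman_fix s)"
    have int: "integrable M (?f s')" "integrable M (?f s)"
      using B s' by (auto intro!: integrable_proposal_value_integrand[where B=B] simp: dist_real_def)
    have pointwise: "\<bar>?f s' \<omega> - ?f s \<omega>\<bar> \<le> e / 2" if "\<omega> \<in> space M" for \<omega>
    proof -
      have x: "X \<omega> \<in> {0..C}" using X_range that by auto
      have "\<bar>bellman_fix (s' + X \<omega>) - bellman_fix (s + X \<omega>)\<bar> < e / 2"
        using close[of "s + X \<omega>" "s' + X \<omega>"] x s' by (auto simp: dist_real_def abs_less_iff)
      moreover have "\<bar>bellman_fix s' - bellman_fix s\<bar> < e / 2"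
        using close[of s s'] s' C_nonneg by (auto simp: dist_real_def abs_less_iff)
      ultimately have "max \<bar>(r (X \<omega>) + bellman_fix (s' + X \<omega>)) - (r (X \<omega>) + bellman_fix (s + X \<omega>))\<bar>
                           \<bar>bellman_fix s' - bellman_fix s\<bar> < e / 2"
        by simp
      then show ?thesis
        using abs_max_diff_le[of "r (X \<omega>) + bellman_fix (s' + X \<omega>)" "bellman_fix s'"
            "r (X \<omega>) + bellman_fix (s + X \<omega>)" "bellman_fix s"] by linarith
    qed
    have "\<bar>proposal_value s' - proposal_value s\<bar> = \<bar>\<integral>\<omega>. ?f s' \<omega> - ?f s \<omega> \<partial>M\<bar>"
      unfolding proposal_value_def using int by simp
    also have "\<dots> \<le> (\<integral>\<omega>. \<bar>?f s' \<omega> - ?f s \<omega>\<bar> \<partial>M)"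
      by (rule integral_abs_bound)
    also have "\<dots> \<le> e / 2"
      using int pointwise by (intro integral_le_const AE_I2) auto
    finally show "dist (proposal_value s') (proposal_value s) < e" using e by (simp add: dist_real_def)
  qed
qed

lemma proposal_value_minus_bellman_fix:
  "proposal_value t - bellman_fix t = (\<integral>\<omega>. max (r (X \<omega>) + bellman_fix (t + X \<omega>) - bellman_fix t) 0 \<partial>M)"
proof -
  obtain B where B: "\<forall>x\<ge>t. \<bar>bellman_fix x\<bar> \<le> B" using tail_boundedD[OF tail_bounded_bellman_fix] by blast
  have "(\<integral>\<omega>. max (r (X \<omega>) + bellman_fix (t + X \<omega>) - bellman_fix t) 0 \<partial>M)
      = (\<integral>\<omega>. max (r (X \<omega>) + bellman_fix (t + X \<omega>)) (bellman_fix t) - bellman_fix t \<partial>M)"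
    by (intro Bochner_Integration.integral_cong) (auto simp: max_def)
  also have "\<dots> = proposal_value t - bellman_fix t"
    unfolding proposal_value_def using integrable_proposal_value_integrand[OF B] prob_space by simp
  finally show ?thesis by simp
qed

lemma bellman_fix_has_derivative:
  assumes t: "t < T"
  shows "(bellman_fix has_real_derivative
           - l * (\<integral>\<omega>. max (r (X \<omega>) + bellman_fix (t + X \<omega>) - bellman_fix t) 0 \<partial>M)) (at t)"
proof -
  define a where "a = t - 1"
  define F where "F x = exp (l * x) * (integral {a..T} discounted_proposal_value
                                      - integral {a..x} discounted_proposal_value)" for x
  have near: "eventually (\<lambda>x. bellman_fix x = F x) (nhds t)"
  proof -
    have "eventually (\<lambda>x. x \<in> {a<..<T}) (nhds t)"
      using t by (intro eventually_nhds_in_open) (auto simp: a_def)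
    then show ?thesis
    proof eventually_elim
      case (elim x)
      then have "integral {a..x} discounted_proposal_value + integral {x..T} discounted_proposal_value
          = integral {a..T} discounted_proposal_value"
        by (intro Henstock_Kurzweil_Integration.integral_combine discounted_proposal_value_integrable_on) auto
      then show ?case using elim by (simp add: bellman_fix_eq_integral F_def)
    qed
  qed
  have "continuous_on {a..(t + T) / 2} discounted_proposal_value"
    unfolding discounted_proposal_value_def
    by (intro continuous_at_imp_continuous_on ballI continuous_intros isCont_proposal_value)
  then have "((\<lambda>x. integral {a..x} discounted_proposal_value) has_real_derivative discounted_proposal_value t) (at t)"
    using integral_has_real_derivative[of a "(t + T) / 2" discounted_proposal_value t] t
    by (simp add: at_within_Icc_at a_def)
  then have "(F has_real_derivative l * F t - exp (l * t) * discounted_proposal_value t) (at t)"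
    unfolding F_def by (auto intro!: derivative_eq_intros simp: algebra_simps)
  moreover have "F t = bellman_fix t" using eventually_nhds_x_imp_x[OF near] by simp
  moreover have "exp (l * t) * discounted_proposal_value t = l * proposal_value t"
    by (simp add: discounted_proposal_value_def exp_minus field_simps)
  ultimately have "(F has_real_derivative - l * (proposal_value t - bellman_fix t)) (at t)"
    by (simp add: algebra_simps)
  then show ?thesis
    unfolding proposal_value_minus_bellman_fix by (rule DERIV_cong_ev[THEN iffD2, OF refl near refl])
qed

section \<open>The growth rate\<close>

lemma continuous_on_excess_reward: "continuous_on {0..b} excess_reward"
proof (rule lipschitz_on_continuous_on)
  show "C-lipschitz_on {0..b} excess_reward"
    using C_nonneg excess_reward_lipschitz by (intro lipschitz_onI) (auto simp: dist_real_def)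
qed

lemma excess_fixed_point_unique: "\<exists>!c. 0 \<le> c \<and> l * excess_reward c - c = 0"
proof (rule ex_ex1I)
  define c1 where "c1 = l * K + 1"
  have c1: "0 \<le> c1" using l_pos K_nonneg by (simp add: c1_def)
  have "l * excess_reward c1 - c1 \<le> 0"
    using mult_left_mono[OF excess_reward_le[OF c1] less_imp_le[OF l_pos]] by (simp add: c1_def)
  moreover have "0 \<le> l * excess_reward 0 - 0" using l_pos excess_reward_nonneg by simp
  moreover have "continuous_on {0..c1} (\<lambda>c. l * excess_reward c - c)"
    by (intro continuous_intros continuous_on_excess_reward)
  ultimately show "\<exists>c. 0 \<le> c \<and> l * excess_reward c - c = 0"
    using IVT2'[of "\<lambda>c. l * excess_reward c - c" c1 0 0] c1 by auto
next
  have strict_antimono: "l * excess_reward c' - c' < l * excess_reward c - c" if "0 \<le> c" "c < c'" for c c'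
    using mult_left_mono[OF excess_reward_antimono[of c c'] less_imp_le[OF l_pos]] that by simp
  fix c c' assume "0 \<le> c \<and> l * excess_reward c - c = 0" "0 \<le> c' \<and> l * excess_reward c' - c' = 0"
  then show "c = c'" using strict_antimono[of c c'] strict_antimono[of c' c] by (cases c c' rule: linorder_cases) auto
qed

lemma bellman_fix_between_linear:
  assumes "0 \<le> c" "l * excess_reward c = c" "t \<le> T"
  shows "c * (T - t) \<le> bellman_fix t \<and> bellman_fix t \<le> c * (T - (t - C))"
proof
  show "c * (T - t) \<le> bellman_fix t"
    using lower_barrier_le_bellman_fix[of c t] assms by (simp add: lower_barrier_def)
  have "upper_barrier c t \<le> c * (T - (t - C))"
    using assms C_nonneg by (auto simp: upper_barrier_def algebra_simps)
  then show "bellman_fix t \<le> c * (T - (t - C))"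
    using bellman_fix_le_upper_barrier[of c t] assms by simp
qed

end

theorem proposition2p1:
  fixes M :: "'a measure" and X :: "'a \<Rightarrow> real" and r :: "real \<Rightarrow> real"
    and l C D E T :: real
  assumes M: "prob_space M"
    and Xm: "X \<in> borel_measurable M"
    and Xrange: "\<forall>w\<in>space M. X w \<in> {0..C}"
    and C: "C > 0"
    and rm: "r \<in> borel_measurable borel"
    and rrange: "\<forall>x\<in>{0..C}. r x \<in> {E..D}"
    and ED: "E \<le> 0" "0 \<le> D"
    and l: "l > 0"
  defines "v \<equiv> value_fn l M X r T"
    and "\<Phi> \<equiv> (\<lambda>c. l * integral\<^sup>L M (\<lambda>w. max (r (X w) - c * X w) 0) - c)"
  shows "(\<forall>t<T. (v has_real_derivative
             (- l * integral\<^sup>L M (\<lambda>w. max (r (X w) + v (t + X w) - v t) 0))) (at t))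
       \<and> (\<forall>t\<ge>T. v t = 0)
       \<and> (\<exists>!c. c \<ge> 0 \<and> \<Phi> c = 0)
       \<and> (\<forall>c. c \<ge> 0 \<and> \<Phi> c = 0 \<longrightarrow>
            (\<forall>t\<in>{0..T}. c * (T - (t - C)) \<ge> v t \<and> v t \<ge> c * (T - t)))"
proof -
  (* Only the bound |r| \<le> max D (- E) on [0, C] is used; C > 0 and the signs of D, E are not. *)
  interpret task_allocation M X r l C "max D (- E)" T
    unfolding task_allocation_def task_allocation_axioms_def
    using M Xm Xrange rm rrange l by (force simp: abs_le_iff)
  have v: "v = bellman_fix" unfolding v_def using value_fn_eq_bellman_fix by blast
  have \<Phi>: "\<Phi> = (\<lambda>c. l * excess_reward c - c)" unfolding \<Phi>_def excess_reward_def ..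
  show ?thesis
    unfolding v \<Phi>
    using bellman_fix_has_derivative bellman_fix_after_horizon excess_fixed_point_unique
      bellman_fix_between_linear
    by auto
qed

end
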